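(* Let $\mathfrak g$ and $\mathfrak g_0$ be real $3$-dimensional Lie algebras such that $\mathfrak g_0$ is a continuous contraction of $\mathfrak g$. Then there exist constant matrices $P,Q\in GL_3(\mathbb R)$ and nonnegative integers $\alpha_1,\alpha_2,\alpha_3$ such that $U_\varepsilon=P\,\mathrm{diag}(\varepsilon^{\alpha_1},\varepsilon^{\alpha_2},\varepsilon^{\alpha_3})\,Q$ is a contraction matrix contracting $\mathfrak g$ to a Lie algebra isomorphic to $\mathfrak g_0$. Moreover, unless $\mathfrak g\cong so(3)$ and $\mathfrak g_0\cong\mathfrak h_3$, the exponents can be chosen with $\alpha_1,\alpha_2,\alpha_3\in\{0,1\}$ (a simple In\"on\"u--Wigner contraction); whereas for $\mathfrak g\cong so(3)$, $\mathfrak g_0\cong\mathfrak h_3$ no matrix of this form with all $\alpha_i\in\{0,1\}$ contracts $\mathfrak g$ to an algebra isomorphic to $\mathfrak g_0$.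
   Context: Continuous contraction: for an $n$-dimensional Lie algebra $\mathfrak g=(V,[\cdot,\cdot])$ and a continuous map $U:(0,1]\to GL(V)$, put $[x,y]_\varepsilon=U_\varepsilon^{-1}[U_\varepsilon x,U_\varepsilon y]$; if $[x,y]_0=\lim_{\varepsilon\to0^+}[x,y]_\varepsilon$ exists for all $x,y$, then $(V,[\cdot,\cdot]_0)$ is a contraction of $\mathfrak g$ and $U$ its contraction matrix (matrices taken in a fixed basis). $so(3)$ has basis with $[e_1,e_2]=e_3$, $[e_2,e_3]=e_1$, $[e_3,e_1]=e_2$; $\mathfrak h_3$ is the Heisenberg algebra with only nonzero bracket $[e_2,e_3]=e_1$. *)

theory Defs
  imports "HOL-Analysis.Analysis"
begin

text \<open>A real 3-dimensional Lie algebra is modelled as a bracket on the fixed space real^3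
  (coordinates w.r.t. a fixed basis e_1, e_2, e_3).\<close>

type_synonym bracket = "real^3 \<Rightarrow> real^3 \<Rightarrow> real^3"

definition lie_bracket :: "bracket \<Rightarrow> bool" where
  "lie_bracket br \<longleftrightarrow> bilinear br \<and> (\<forall>x. br x x = 0) \<and>
     (\<forall>x y z. br x (br y z) + br y (br z x) + br z (br x y) = 0)"

definition lie_iso :: "bracket \<Rightarrow> bracket \<Rightarrow> bool" where
  "lie_iso br1 br2 \<longleftrightarrow> (\<exists>A :: real^3^3. invertible A \<and>
     (\<forall>x y. A *v br1 x y = br2 (A *v x) (A *v y)))"

definition contracts_via :: "bracket \<Rightarrow> (real \<Rightarrow> real^3^3) \<Rightarrow> bracket \<Rightarrow> bool" where
  "contracts_via br U br0 \<longleftrightarrow>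
     continuous_on {0<..1} U \<and> (\<forall>\<epsilon>\<in>{0<..1}. invertible (U \<epsilon>)) \<and>
     (\<forall>x y. ((\<lambda>\<epsilon>. matrix_inv (U \<epsilon>) *v br (U \<epsilon> *v x) (U \<epsilon> *v y)) \<longlongrightarrow> br0 x y)
              (at_right 0))"

definition continuous_contraction :: "bracket \<Rightarrow> bracket \<Rightarrow> bool" where
  "continuous_contraction br br0 \<longleftrightarrow> (\<exists>U. contracts_via br U br0)"

definition diag_pow :: "real \<Rightarrow> (3 \<Rightarrow> nat) \<Rightarrow> real^3^3" where
  "diag_pow \<epsilon> \<alpha> = (\<chi> i j. if i = j then \<epsilon> ^ \<alpha> i else 0)"

definition so3_br :: bracket where
  "so3_br x y = vector [x$2*y$3 - x$3*y$2, x$3*y$1 - x$1*y$3, x$1*y$2 - x$2*y$1]"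

definition h3_br :: bracket where
  "h3_br x y = vector [x$2*y$3 - x$3*y$2, 0, 0]"

end

theory Submission
  imports Defs
begin

text \<open>Every real three-dimensional Lie bracket has the Bianchi form
  \<open>[x, y] = N (x \<times> y) + (a \<bullet> x) y - (a \<bullet> y) x\<close> with \<open>N\<close> symmetric and \<open>N a = 0\<close>, and a change
  of basis \<open>U\<close> acts by \<open>N \<mapsto> det U \<cdot> U\<^sup>-\<^sup>1 N U\<^sup>-\<^sup>T\<close>, \<open>a \<mapsto> U\<^sup>T a\<close>. Diagonalising \<open>N\<close> by
  congruence reduces every algebra to a Bianchi normal form. Along a contraction the pair
  \<open>(N, a)\<close> converges, so closed conditions invariant under this action (vanishing of \<open>a\<close>, of \<open>N\<close>
  or of \<open>det N\<close>, semidefiniteness of \<open>N\<close> or of its adjugate, \<open>adj N = c a a\<^sup>T\<close>) pass to the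
  limit; and as congruence keeps isotropic vectors, a form with one cannot tend to the identity.
  This leaves a short list of degenerations between normal forms, each realised by an explicit
  \<open>P diag(\<epsilon>\<^sup>\<alpha>\<^sup>1, \<epsilon>\<^sup>\<alpha>\<^sup>2, \<epsilon>\<^sup>\<alpha>\<^sup>3)\<close> with exponents in \<open>{0, 1}\<close>, except so(3) to \<open>h\<^sub>3\<close>, which
  needs \<open>\<alpha> = (2, 1, 1)\<close>. With exponents in \<open>{0, 1}\<close> the limit of the definite \<open>N\<close> of so(3) is
  zero or a principal block of a definite matrix, so it never has the rank one of \<open>h\<^sub>3\<close>.\<close>

unbundle cross3_syntax

lemma matrix_inv_right:
  fixes A :: "'a::semiring_1^'n^'n"
  assumes "invertible A"
  shows "A ** matrix_inv A = mat 1"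
  using someI_ex[OF assms[unfolded invertible_def]] unfolding matrix_inv_def by blast

lemma matrix_inv_left:
  fixes A :: "'a::semiring_1^'n^'n"
  assumes "invertible A"
  shows "matrix_inv A ** A = mat 1"
  using someI_ex[OF assms[unfolded invertible_def]] unfolding matrix_inv_def by blast

lemma invertible_matrix_inv:
  fixes A :: "'a::semiring_1^'n^'n"
  shows "invertible A \<Longrightarrow> invertible (matrix_inv A)"
  using matrix_inv_left matrix_inv_right unfolding invertible_def by blast

lemma matrix_inv_eqI:
  fixes A B :: "'a::field^'n^'n"
  assumes AB: "A ** B = mat 1"
  shows "matrix_inv A = B"
proof -
  have "matrix_inv A = (matrix_inv A ** A) ** B"
    by (simp add: AB flip: matrix_mul_assoc)
  also have "\<dots> = B"
    using AB invertible_right_inverse matrix_inv_left by fastforce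
  finally show ?thesis .
qed

lemma matrix_inv_mult:
  fixes A B :: "'a::field^'n^'n"
  assumes "invertible A" and "invertible B"
  shows "matrix_inv (A ** B) = matrix_inv B ** matrix_inv A"
proof (rule matrix_inv_eqI)
  have "A ** B ** (matrix_inv B ** matrix_inv A) = A ** (B ** matrix_inv B) ** matrix_inv A"
    by (simp add: matrix_mul_assoc)
  then show "A ** B ** (matrix_inv B ** matrix_inv A) = mat 1"
    by (simp add: assms matrix_inv_right)
qed

lemma det_matrix_inv:
  fixes A :: "'a::field^'n^'n"
  assumes "invertible A"
  shows "det (matrix_inv A) = 1 / det A"
proof -
  have "det A * det (matrix_inv A) = 1"
    by (metis assms det_I det_mul matrix_inv_right)
  moreover have "det A \<noteq> 0"
    using assms invertible_det_nz by blast
  ultimately show ?thesis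
    by (simp add: eq_divide_eq mult.commute)
qed

section \<open>The Bianchi form of a Lie bracket\<close>

lemmas vec3_simps = vec_eq_iff forall_3 sum_3 matrix_matrix_mult_def matrix_vector_mult_def
  vector_matrix_mult_def transpose_def inner_vec_def mat_def cross3_def det_3

definition bianchi_bracket :: "real^3^3 \<Rightarrow> real^3 \<Rightarrow> bracket" where
  "bianchi_bracket N a x y = N *v (x \<times> y) + (a \<bullet> x) *\<^sub>R y - (a \<bullet> y) *\<^sub>R x"

text \<open>For \<^term>\<open>bianchi_bracket N a\<close> with symmetric \<open>N\<close> this matrix is \<open>N\<close> plus the matrix
  of \<open>x \<mapsto> a \<times> x\<close>, whence the formulas for \<open>N\<close> and \<open>a\<close> below.\<close>
definition structure_matrix :: "bracket \<Rightarrow> real^3^3" where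
  "structure_matrix br =
     vector [br (vector [0, 1, 0]) (vector [0, 0, 1]), br (vector [0, 0, 1]) (vector [1, 0, 0]),
       br (vector [1, 0, 0]) (vector [0, 1, 0])]"

definition bianchi_N :: "bracket \<Rightarrow> real^3^3" where
  "bianchi_N br = (1/2) *\<^sub>R (structure_matrix br + transpose (structure_matrix br))"

definition bianchi_a :: "bracket \<Rightarrow> real^3" where
  "bianchi_a br = (let R = structure_matrix br in
     (1/2) *\<^sub>R vector [R$3$2 - R$2$3, R$1$3 - R$3$1, R$2$1 - R$1$2])"

lemma symmetric_matrix3_entries:
  fixes N :: "real^3^3"
  assumes "transpose N = N"
  shows "N$2$1 = N$1$2" "N$3$1 = N$1$3" "N$3$2 = N$2$3"
proof -
  have "N $ j $ i = N $ i $ j" for i j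
    using arg_cong[OF assms, of "\<lambda>M. M $ i $ j"] by (simp add: transpose_def)
  then show "N$2$1 = N$1$2" "N$3$1 = N$1$3" "N$3$2 = N$2$3"
    by blast+
qed

lemma symmetric_bianchi_N: "transpose (bianchi_N br) = bianchi_N br"
proof -
  have "transpose (A + transpose A) = A + transpose A" for A :: "real^3^3"
    by (simp add: vec_eq_iff transpose_def)
  then show ?thesis
    by (simp add: bianchi_N_def transpose_scalar)
qed

lemma bianchi_N_bianchi_bracket:
  assumes "transpose N = N"
  shows "bianchi_N (bianchi_bracket N a) = N"
  using symmetric_matrix3_entries[OF assms]
  by (simp add: bianchi_N_def structure_matrix_def bianchi_bracket_def vec3_simps)

lemma bianchi_a_bianchi_bracket:
  assumes "transpose N = N"
  shows "bianchi_a (bianchi_bracket N a) = a"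
  using symmetric_matrix3_entries[OF assms]
  by (simp add: bianchi_a_def structure_matrix_def bianchi_bracket_def vec3_simps)

lemma bilinear_antisym:
  assumes "bilinear br" and "\<And>x. br x x = 0"
  shows "br y x = - br x y"
proof -
  have "br (x + y) (x + y) = br x x + br y x + (br x y + br y y)"
    by (simp only: bilinear_ladd[OF assms(1)] bilinear_radd[OF assms(1)])
  then show ?thesis
    by (simp add: assms(2) eq_neg_iff_add_eq_0 add.commute)
qed

lemma lie_bracket_eq_bianchi_bracket:
  assumes "lie_bracket br"
  shows "br = bianchi_bracket (bianchi_N br) (bianchi_a br)"
proof (intro ext)
  fix x y :: "real^3"
  let ?e1 = "vector [1, 0, 0] :: real^3" and ?e2 = "vector [0, 1, 0] :: real^3"
    and ?e3 = "vector [0, 0, 1] :: real^3"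
  have bil: "bilinear br" and alt: "\<And>x. br x x = 0"
    using assms by (auto simp: lie_bracket_def)
  note anti = bilinear_antisym[OF bil alt]
  have expand: "v$1 *\<^sub>R ?e1 + v$2 *\<^sub>R ?e2 + v$3 *\<^sub>R ?e3 = v" for v :: "real^3"
    by (simp add: vec3_simps)
  have "br x y = br (x$1 *\<^sub>R ?e1 + x$2 *\<^sub>R ?e2 + x$3 *\<^sub>R ?e3) (y$1 *\<^sub>R ?e1 + y$2 *\<^sub>R ?e2 + y$3 *\<^sub>R ?e3)"
    by (simp only: expand)
  also have "\<dots> = (x$2*y$3 - x$3*y$2) *\<^sub>R br (?e2) (?e3) + (x$3*y$1 - x$1*y$3) *\<^sub>R br (?e3) (?e1)
      + (x$1*y$2 - x$2*y$1) *\<^sub>R br (?e1) (?e2)"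
    by (simp add: bilinear_ladd[OF bil] bilinear_radd[OF bil] bilinear_lmul[OF bil]
        bilinear_rmul[OF bil] alt anti[of "?e1" "?e2"] anti[of "?e1" "?e3"] anti[of "?e2" "?e3"]
        algebra_simps)
  also have "\<dots> = bianchi_bracket (bianchi_N br) (bianchi_a br) x y"
    by (simp add: bianchi_N_def bianchi_a_def structure_matrix_def bianchi_bracket_def vec3_simps)
      (simp_all add: field_simps)
  finally show "br x y = bianchi_bracket (bianchi_N br) (bianchi_a br) x y" .
qed

lemma bianchi_bracket_jacobi_basis:
  assumes "transpose N = N"
  defines "e1 \<equiv> vector [1, 0, 0] :: real^3" and "e2 \<equiv> vector [0, 1, 0] :: real^3"
    and "e3 \<equiv> vector [0, 0, 1] :: real^3"
  shows "bianchi_bracket N a e1 (bianchi_bracket N a e2 e3) + bianchi_bracket N a e2 (bianchi_bracket N a e3 e1)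
    + bianchi_bracket N a e3 (bianchi_bracket N a e1 e2) = (- 2) *\<^sub>R (N *v a)"
  using symmetric_matrix3_entries[OF assms(1)]
  by (simp add: bianchi_bracket_def e1_def e2_def e3_def vec3_simps) (simp_all add: algebra_simps)

lemma lie_bracket_bianchi_N_a:
  assumes "lie_bracket br"
  shows "bianchi_N br *v bianchi_a br = 0"
proof -
  let ?e1 = "vector [1, 0, 0] :: real^3" and ?e2 = "vector [0, 1, 0] :: real^3"
    and ?e3 = "vector [0, 0, 1] :: real^3"
  have "br ?e1 (br ?e2 ?e3) + br ?e2 (br ?e3 ?e1) + br ?e3 (br ?e1 ?e2) = 0"
    using assms by (simp add: lie_bracket_def)
  then show ?thesis
    using bianchi_bracket_jacobi_basis[OF symmetric_bianchi_N, of br "bianchi_a br"]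
    by (simp flip: lie_bracket_eq_bianchi_bracket[OF assms])
qed

section \<open>Change of basis and contractions\<close>

definition change_basis ::
    "real^'n^'n \<Rightarrow> (real^'n \<Rightarrow> real^'n \<Rightarrow> real^'n) \<Rightarrow> real^'n \<Rightarrow> real^'n \<Rightarrow> real^'n" where
  "change_basis U br x y = matrix_inv U *v br (U *v x) (U *v y)"

lemma contracts_via_iff_change_basis:
  "contracts_via br U br0 \<longleftrightarrow> continuous_on {0<..1} U \<and> (\<forall>\<epsilon>\<in>{0<..1}. invertible (U \<epsilon>)) \<and>
     (\<forall>x y. ((\<lambda>\<epsilon>. change_basis (U \<epsilon>) br x y) \<longlongrightarrow> br0 x y) (at_right 0))"
  by (simp add: contracts_via_def change_basis_def)

lemma change_basis_mult:
  fixes U V :: "real^'n^'n"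
  assumes "invertible U" and "invertible V"
  shows "change_basis U (change_basis V br) = change_basis (V ** U) br"
  by (intro ext) (simp add: change_basis_def matrix_inv_mult assms matrix_vector_mul_assoc)

lemma change_basis_id: "change_basis (mat 1) br = br"
  by (intro ext) (simp add: change_basis_def matrix_inv_eqI)

lemma change_basis_matrix_inv:
  fixes U :: "real^'n^'n"
  assumes "invertible U"
  shows "change_basis (matrix_inv U) (change_basis U br) = br"
  by (simp add: assms change_basis_mult invertible_matrix_inv matrix_inv_right change_basis_id)

lemma lie_iso_iff_change_basis: "lie_iso br1 br2 \<longleftrightarrow> (\<exists>A. invertible A \<and> br1 = change_basis A br2)"
proof
  assume "lie_iso br1 br2"
  then obtain A where A: "invertible A" "\<And>x y. A *v br1 x y = br2 (A *v x) (A *v y)"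
    unfolding lie_iso_def by blast
  have "br1 x y = change_basis A br2 x y" for x y
  proof -
    have "br1 x y = matrix_inv A *v (A *v br1 x y)"
      by (simp add: matrix_vector_mul_assoc matrix_inv_left[OF A(1)])
    then show ?thesis
      by (simp add: change_basis_def A(2))
  qed
  then show "\<exists>A. invertible A \<and> br1 = change_basis A br2"
    using A(1) by blast
next
  assume "\<exists>A. invertible A \<and> br1 = change_basis A br2"
  then obtain A where A: "invertible A" "br1 = change_basis A br2"
    by blast
  have "A *v br1 x y = br2 (A *v x) (A *v y)" for x y
    by (simp add: A(2) change_basis_def matrix_vector_mul_assoc matrix_inv_right[OF A(1)])
  then show "lie_iso br1 br2"
    unfolding lie_iso_def using A(1) by blast
qed

lemma lie_iso_change_basis: "invertible U \<Longrightarrow> lie_iso (change_basis U br) br"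
  unfolding lie_iso_iff_change_basis by blast

lemma lie_iso_refl: "lie_iso br br"
  using lie_iso_change_basis[of "mat 1" br] by (simp add: change_basis_id invertible_def)

lemma lie_iso_sym: "lie_iso br1 br2 \<Longrightarrow> lie_iso br2 br1"
  unfolding lie_iso_iff_change_basis by (metis change_basis_matrix_inv invertible_matrix_inv)

lemma lie_iso_trans: "lie_iso br1 br2 \<Longrightarrow> lie_iso br2 br3 \<Longrightarrow> lie_iso br1 br3"
  unfolding lie_iso_iff_change_basis by (metis change_basis_mult invertible_mult)

text \<open>The cross product transforms with the cofactor matrix; this is where the factor
  \<^term>\<open>det U\<close> in front of the congruence of \<open>N\<close> comes from.\<close>
lemma change_basis_bianchi_bracket:
  assumes UM: "U ** M = mat 1"
  shows "change_basis U (bianchi_bracket N a) =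
    bianchi_bracket (det U *\<^sub>R (M ** N ** transpose M)) (a v* U)"
proof (intro ext)
  fix x y :: "real^3"
  have MU: "M ** U = mat 1"
    using UM matrix_left_right_inverse by blast
  have cross: "(U *v x) \<times> (U *v y) = det U *\<^sub>R ((x \<times> y) v* M)"
  proof -
    have "(U *v x) \<times> (U *v y) = (((U *v x) \<times> (U *v y)) v* U) v* M"
      by (simp add: vector_matrix_mul_assoc UM)
    also have "\<dots> = det U *\<^sub>R ((x \<times> y) v* M)"
      using cross_matrix_mult[of U x y] by (simp add: scaleR_vector_matrix_assoc)
    finally show ?thesis .
  qed
  have "change_basis U (bianchi_bracket N a) x y =
      M *v (N *v ((U *v x) \<times> (U *v y))) + ((a v* U) \<bullet> x) *\<^sub>R y - ((a v* U) \<bullet> y) *\<^sub>R x"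
    by (simp add: change_basis_def bianchi_bracket_def matrix_inv_eqI[OF UM] matrix_vector_mul_assoc
        MU dot_lmul_matrix algebra_simps)
  also have "\<dots> = bianchi_bracket (det U *\<^sub>R (M ** N ** transpose M)) (a v* U) x y"
  proof -
    have "(det U *\<^sub>R (M ** N ** transpose M)) *v (x \<times> y) = M *v (N *v ((U *v x) \<times> (U *v y)))"
      by (simp add: cross matrix_vector_mult_scaleR
          flip: scaleR_matrix_vector_assoc matrix_vector_mul_assoc)
    then show ?thesis
      by (simp add: bianchi_bracket_def)
  qed
  finally show "change_basis U (bianchi_bracket N a) x y =
      bianchi_bracket (det U *\<^sub>R (M ** N ** transpose M)) (a v* U) x y" .
qed

lemma continuous_on_matrix_mult:
  fixes U V :: "real \<Rightarrow> real^'n^'n"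
  assumes "continuous_on S U" and "continuous_on S V"
  shows "continuous_on S (\<lambda>\<epsilon>. U \<epsilon> ** V \<epsilon>)"
  unfolding matrix_matrix_mult_def
  by (intro continuous_on_vec_lambda continuous_intros continuous_on_component assms)

lemma eventually_at_right_0_Ioc: "\<forall>\<^sub>F \<epsilon> in at_right (0::real). \<epsilon> \<in> {0<..1}"
proof -
  have "\<forall>\<^sub>F \<epsilon> in at_right (0::real). \<epsilon> \<in> {0<..<1}"
    by (rule eventually_at_right_real) simp
  then show ?thesis
    by (rule eventually_mono) auto
qed

lemma contracts_via_eventually_invertible:
  "contracts_via br U br0 \<Longrightarrow> \<forall>\<^sub>F \<epsilon> in at_right 0. invertible (U \<epsilon>)"
  using eventually_at_right_0_Ioc unfolding contracts_via_def by (auto elim: eventually_mono)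

lemma contracts_via_change_basis_left:
  assumes B: "invertible B" and c: "contracts_via (change_basis B br) U br0"
  shows "contracts_via br (\<lambda>\<epsilon>. B ** U \<epsilon>) br0"
  unfolding contracts_via_iff_change_basis
proof (intro conjI ballI allI)
  show "continuous_on {0<..1} (\<lambda>\<epsilon>. B ** U \<epsilon>)"
    using c unfolding contracts_via_def by (intro continuous_on_matrix_mult continuous_on_const) auto
  show "invertible (B ** U \<epsilon>)" if "\<epsilon> \<in> {0<..1}" for \<epsilon>
    using c B that unfolding contracts_via_def by (auto intro: invertible_mult)
  fix x y
  have "\<forall>\<^sub>F \<epsilon> in at_right 0. change_basis (U \<epsilon>) (change_basis B br) x y = change_basis (B ** U \<epsilon>) br x y"
    using contracts_via_eventually_invertible[OF c] by (rule eventually_mono) (simp add: change_basis_mult B)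
  with c show "((\<lambda>\<epsilon>. change_basis (B ** U \<epsilon>) br x y) \<longlongrightarrow> br0 x y) (at_right 0)"
    unfolding contracts_via_iff_change_basis by (auto intro: Lim_transform_eventually)
qed

lemma contracts_via_change_basis_right:
  assumes B: "invertible B" and c: "contracts_via br U br0"
  shows "contracts_via br (\<lambda>\<epsilon>. U \<epsilon> ** B) (change_basis B br0)"
  unfolding contracts_via_iff_change_basis
proof (intro conjI ballI allI)
  show "continuous_on {0<..1} (\<lambda>\<epsilon>. U \<epsilon> ** B)"
    using c unfolding contracts_via_def by (intro continuous_on_matrix_mult continuous_on_const) auto
  show "invertible (U \<epsilon> ** B)" if "\<epsilon> \<in> {0<..1}" for \<epsilon>
    using c B that unfolding contracts_via_def by (auto intro: invertible_mult)
  fix x y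
  have "((\<lambda>\<epsilon>. matrix_inv B *v change_basis (U \<epsilon>) br (B *v x) (B *v y)) \<longlongrightarrow>
      matrix_inv B *v br0 (B *v x) (B *v y)) (at_right 0)"
    using c unfolding contracts_via_iff_change_basis
    by (intro bounded_linear.tendsto[OF matrix_vector_mul_bounded_linear]) blast
  moreover have "\<forall>\<^sub>F \<epsilon> in at_right 0.
      matrix_inv B *v change_basis (U \<epsilon>) br (B *v x) (B *v y) = change_basis (U \<epsilon> ** B) br x y"
    using contracts_via_eventually_invertible[OF c]
    by (rule eventually_mono) (simp add: change_basis_mult[symmetric] B change_basis_def)
  ultimately show "((\<lambda>\<epsilon>. change_basis (U \<epsilon> ** B) br x y) \<longlongrightarrow> change_basis B br0 x y) (at_right 0)"
    by (auto simp: change_basis_def intro: Lim_transform_eventually)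
qed

lemma contracts_via_const: "invertible A \<Longrightarrow> contracts_via br (\<lambda>_. A) (change_basis A br)"
  by (simp add: contracts_via_iff_change_basis)

lemma contracts_via_lie_iso:
  assumes "lie_iso br br'" and "lie_iso br0 br0'" and "contracts_via br U br0"
  obtains A B where "contracts_via br' (\<lambda>\<epsilon>. A ** U \<epsilon> ** B) br0'"
proof -
  obtain A where A: "invertible A" "br = change_basis A br'"
    using assms(1) lie_iso_iff_change_basis by blast
  obtain B where B: "invertible B" "br0' = change_basis B br0"
    using lie_iso_sym[OF assms(2)] lie_iso_iff_change_basis by blast
  have "contracts_via br' (\<lambda>\<epsilon>. A ** U \<epsilon>) br0"
    using contracts_via_change_basis_left[OF A(1)] assms(3) A(2) by blast
  then have "contracts_via br' (\<lambda>\<epsilon>. A ** U \<epsilon> ** B) br0'"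
    using contracts_via_change_basis_right[OF B(1)] B(2) by blast
  then show thesis ..
qed

section \<open>Bianchi normal forms\<close>

definition diag3 :: "real \<Rightarrow> real \<Rightarrow> real \<Rightarrow> real^3^3" where
  "diag3 p q r = (\<chi> i j. if i = j then vector [p, q, r] $ i else 0)"

lemma diag3_nth [simp]:
  "diag3 p q r $ 1 $ 1 = p" "diag3 p q r $ 2 $ 2 = q" "diag3 p q r $ 3 $ 3 = r"
  "diag3 p q r $ 1 $ 2 = 0" "diag3 p q r $ 1 $ 3 = 0" "diag3 p q r $ 2 $ 1 = 0"
  "diag3 p q r $ 2 $ 3 = 0" "diag3 p q r $ 3 $ 1 = 0" "diag3 p q r $ 3 $ 2 = 0"
  by (simp_all add: diag3_def)

lemma diag3_eq_iff [simp]: "diag3 p q r = diag3 p' q' r' \<longleftrightarrow> p = p' \<and> q = q' \<and> r = r'"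
  by (auto simp: vec_eq_iff forall_3 diag3_def)

lemma diag3_eq_0_iff [simp]: "diag3 p q r = 0 \<longleftrightarrow> p = 0 \<and> q = 0 \<and> r = 0"
  by (auto simp: vec_eq_iff forall_3 diag3_def)

lemma symmetric_diag3 [simp]: "transpose (diag3 p q r) = diag3 p q r"
  by (auto simp: vec_eq_iff forall_3 transpose_def diag3_def)

lemma scaleR_diag3 [simp]: "c *\<^sub>R diag3 p q r = diag3 (c*p) (c*q) (c*r)"
  by (simp add: vec_eq_iff forall_3)

lemma vector3_eq_0_iff [simp]: "(vector [p, q, r] :: real^3) = 0 \<longleftrightarrow> p = 0 \<and> q = 0 \<and> r = 0"
  by (auto simp: vec_eq_iff forall_3)

lemma vector3_zero [simp]: "vector [0, 0, 0] = (0 :: real^3)"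
  by simp

lemma mat_1_eq_diag3: "(mat 1 :: real^3^3) = diag3 1 1 1"
  by (simp add: vec_eq_iff forall_3 mat_def)

lemma lie_iso_bianchi_bracket_congruence:
  assumes M: "invertible M" and a: "a' v* M = a"
  shows "lie_iso (bianchi_bracket N a) (bianchi_bracket ((1 / det M) *\<^sub>R (M ** N ** transpose M)) a')"
proof -
  let ?U = "matrix_inv M"
  have "a v* ?U = a'"
    using a by (simp add: vector_matrix_mul_assoc matrix_inv_right[OF M] flip: a)
  then have "change_basis ?U (bianchi_bracket N a) =
      bianchi_bracket ((1 / det M) *\<^sub>R (M ** N ** transpose M)) a'"
    by (simp add: change_basis_bianchi_bracket[OF matrix_inv_left[OF M]] det_matrix_inv[OF M])
  then show ?thesis
    using lie_iso_change_basis[OF invertible_matrix_inv[OF M]] lie_iso_sym by metis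
qed

lemma lie_iso_diag3_scale:
  assumes t: "t1 \<noteq> 0" "t2 \<noteq> 0" "t3 \<noteq> 0"
    and "p' = t1*t1*p / (t1*t2*t3)" "q' = t2*t2*q / (t1*t2*t3)" "r' = t3*t3*r / (t1*t2*t3)"
    and "k' = k / t3"
  shows "lie_iso (bianchi_bracket (diag3 p q r) (vector [0, 0, k]))
    (bianchi_bracket (diag3 p' q' r') (vector [0, 0, k']))"
proof -
  let ?M = "diag3 t1 t2 t3"
  have d: "det ?M = t1*t2*t3"
    by (simp add: det_3)
  have "invertible ?M"
    unfolding invertible_det_nz d using t by simp
  moreover have "vector [0, 0, k'] v* ?M = vector [0, 0, k]"
    using assms by (simp add: vec_eq_iff forall_3 vector_matrix_mult_def sum_3)
  moreover have "(1 / det ?M) *\<^sub>R (?M ** diag3 p q r ** transpose ?M) = diag3 p' q' r'"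
    using assms(4-6)
    by (simp add: d vec_eq_iff forall_3 matrix_matrix_mult_def sum_3 transpose_def)
  ultimately show ?thesis
    by (metis lie_iso_bianchi_bracket_congruence)
qed

lemma lie_iso_diag3_neg:
  "lie_iso (bianchi_bracket (diag3 p q r) 0) (bianchi_bracket (diag3 (-p) (-q) (-r)) 0)"
  using lie_iso_diag3_scale[of "-1" "-1" "-1" "-p" p "-q" q "-r" r 0 0] by simp

lemma lie_iso_diag3_swap12_neg:
  "lie_iso (bianchi_bracket (diag3 p q r) (vector [0, 0, k]))
    (bianchi_bracket (diag3 (-q) (-p) (-r)) (vector [0, 0, k]))"
proof -
  let ?S = "vector [vector [0, 1, 0], vector [1, 0, 0], vector [0, 0, 1]] :: real^3^3"
  have "invertible ?S" and "det ?S = -1"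
    by (simp_all add: invertible_det_nz det_3)
  moreover have "vector [0, 0, k] v* ?S = vector [0, 0, k]"
    by (simp add: vec3_simps)
  moreover have "?S ** diag3 p q r ** transpose ?S = diag3 q p r"
    by (simp add: vec3_simps)
  ultimately show ?thesis
    by (metis (no_types, lifting) lie_iso_bianchi_bracket_congruence scaleR_diag3 divide_minus1
        mult_minus_left mult_1)
qed

lemma lie_iso_diag3_swap12:
  "lie_iso (bianchi_bracket (diag3 p q r) 0) (bianchi_bracket (diag3 q p r) 0)"
  using lie_iso_diag3_swap12_neg[of p q r 0] lie_iso_diag3_neg[of "-q" "-p" "-r"]
  by (auto intro: lie_iso_trans)

lemma lie_iso_diag3_swap23:
  "lie_iso (bianchi_bracket (diag3 p q r) 0) (bianchi_bracket (diag3 p r q) 0)"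
proof -
  let ?S = "vector [vector [-1, 0, 0], vector [0, 0, -1], vector [0, -1, 0]] :: real^3^3"
  have "invertible ?S" and "det ?S = 1"
    by (simp_all add: invertible_det_nz det_3)
  moreover have "0 v* ?S = 0"
    by simp
  moreover have "?S ** diag3 p q r ** transpose ?S = diag3 p r q"
    by (simp add: vec3_simps)
  ultimately show ?thesis
    by (metis lie_iso_bianchi_bracket_congruence scaleR_one div_by_1)
qed

lemma lie_iso_diag3_sgn:
  assumes "p \<noteq> 0" "q \<noteq> 0" "r \<noteq> 0"
  shows "lie_iso (bianchi_bracket (diag3 p q r) 0) (bianchi_bracket (diag3 (sgn p) (sgn q) (sgn r)) 0)"
proof -
  define t1 where "t1 = sqrt \<bar>q*r\<bar>"
  define t2 where "t2 = sqrt \<bar>p*r\<bar>"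
  define t3 where "t3 = sqrt \<bar>p*q\<bar>"
  have sq: "t1*t1 = \<bar>q*r\<bar>" "t2*t2 = \<bar>p*r\<bar>" "t3*t3 = \<bar>p*q\<bar>"
    by (simp_all add: t1_def t2_def t3_def)
  have "t1*t2*t3 = sqrt ((p*q*r)\<^sup>2)"
    by (simp add: t1_def t2_def t3_def abs_mult power2_eq_square algebra_simps flip: real_sqrt_mult)
  then have prod: "t1*t2*t3 = \<bar>p*q*r\<bar>"
    by simp
  have "lie_iso (bianchi_bracket (diag3 p q r) (vector [0, 0, 0]))
      (bianchi_bracket (diag3 (sgn p) (sgn q) (sgn r)) (vector [0, 0, 0]))"
  proof (rule lie_iso_diag3_scale)
    show "t1 \<noteq> 0" "t2 \<noteq> 0" "t3 \<noteq> 0"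
      using assms by (simp_all add: t1_def t2_def t3_def)
    show "sgn p = t1*t1*p / (t1*t2*t3)" "sgn q = t2*t2*q / (t1*t2*t3)" "sgn r = t3*t3*r / (t1*t2*t3)"
      unfolding sq prod using assms by (simp_all add: abs_mult real_sgn_eq)
  qed simp
  then show ?thesis
    by simp
qed

text \<open>\<^term>\<open>Bianchi_B c\<close>, with \<open>N = diag(1, c, 0)\<close> and \<open>a = e3\<close>, is of type IV for \<open>c = 0\<close>,
  VI_h for \<open>c < 0\<close> and VII_h for \<open>c > 0\<close>.\<close>
datatype bianchi_type =
  Bianchi_I | Bianchi_II | Bianchi_V | Bianchi_VI0 | Bianchi_VII0 | Bianchi_VIII | Bianchi_IX
  | Bianchi_B real

fun bianchi_nf_N :: "bianchi_type \<Rightarrow> real^3^3" where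
  "bianchi_nf_N Bianchi_I = diag3 0 0 0"
| "bianchi_nf_N Bianchi_II = diag3 1 0 0"
| "bianchi_nf_N Bianchi_V = diag3 0 0 0"
| "bianchi_nf_N Bianchi_VI0 = diag3 1 (-1) 0"
| "bianchi_nf_N Bianchi_VII0 = diag3 1 1 0"
| "bianchi_nf_N Bianchi_VIII = diag3 1 1 (-1)"
| "bianchi_nf_N Bianchi_IX = diag3 1 1 1"
| "bianchi_nf_N (Bianchi_B c) = diag3 1 c 0"

fun bianchi_nf_a :: "bianchi_type \<Rightarrow> real^3" where
  "bianchi_nf_a Bianchi_V = vector [0, 0, 1]"
| "bianchi_nf_a (Bianchi_B c) = vector [0, 0, 1]"
| "bianchi_nf_a _ = 0"

definition bianchi_nf :: "bianchi_type \<Rightarrow> bracket" where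
  "bianchi_nf t = bianchi_bracket (bianchi_nf_N t) (bianchi_nf_a t)"

lemma symmetric_bianchi_nf_N [simp]: "transpose (bianchi_nf_N t) = bianchi_nf_N t"
  by (cases t) simp_all

lemma so3_br_eq_bianchi_nf: "so3_br = bianchi_nf Bianchi_IX"
  by (intro ext) (simp add: so3_br_def bianchi_nf_def bianchi_bracket_def vec3_simps)

lemma h3_br_eq_bianchi_nf: "h3_br = bianchi_nf Bianchi_II"
  by (intro ext) (simp add: h3_br_def bianchi_nf_def bianchi_bracket_def vec3_simps)

lemma bianchi_class_A_rank_le_2: "\<exists>t. lie_iso (bianchi_bracket (diag3 p q 0) 0) (bianchi_nf t)"
proof (cases "p = 0 \<or> q = 0")
  case True
  then obtain x where x: "lie_iso (bianchi_bracket (diag3 p q 0) 0) (bianchi_bracket (diag3 x 0 0) 0)"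
    using lie_iso_refl lie_iso_diag3_swap12[of p q 0] by auto
  show ?thesis
  proof (cases "x = 0")
    case True
    then show ?thesis
      using x by (auto simp: bianchi_nf_def intro!: exI[of _ Bianchi_I])
  next
    case False
    have "lie_iso (bianchi_bracket (diag3 x 0 0) (vector [0, 0, 0]))
        (bianchi_bracket (diag3 1 0 0) (vector [0, 0, 0]))"
      by (rule lie_iso_diag3_scale[of 1 1 x]) (use False in simp_all)
    then show ?thesis
      using x lie_iso_trans by (auto simp: bianchi_nf_def intro!: exI[of _ Bianchi_II])
  qed
next
  case False
  define \<rho> where "\<rho> = sqrt \<bar>p*q\<bar>"
  have \<rho>: "\<rho> \<noteq> 0" "\<rho> * \<rho> = \<bar>p*q\<bar>"
    using False by (simp_all add: \<rho>_def)
  have "lie_iso (bianchi_bracket (diag3 p q 0) (vector [0, 0, 0]))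
      (bianchi_bracket (diag3 1 (sgn (p*q)) 0) (vector [0, 0, 0]))"
  proof (rule lie_iso_diag3_scale[of 1 "p/\<rho>" \<rho>])
    have "p/\<rho> * (p/\<rho>) * q / (1 * (p/\<rho>) * \<rho>) = p*q / (\<rho>*\<rho>)"
      using False \<rho> by (simp add: field_simps)
    then show "sgn (p*q) = p/\<rho> * (p/\<rho>) * q / (1 * (p/\<rho>) * \<rho>)"
      using \<rho> by (simp add: real_sgn_eq)
  qed (use False \<rho> in simp_all)
  moreover have "sgn (p*q) = 1 \<or> sgn (p*q) = -1"
    using False by (simp add: sgn_real_def)
  ultimately show ?thesis
    by (auto simp: bianchi_nf_def intro: exI[of _ Bianchi_VII0] exI[of _ Bianchi_VI0])
qed

lemma bianchi_class_A_signs: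
  assumes "s1 = 1 \<or> s1 = -1" and "s2 = 1 \<or> s2 = -1" and "s3 = 1 \<or> s3 = -1"
  shows "\<exists>t. lie_iso (bianchi_bracket (diag3 s1 s2 s3) 0) (bianchi_nf t)"
proof -
  have neg: "lie_iso (bianchi_bracket (diag3 x y z) 0) B"
    if "lie_iso (bianchi_bracket (diag3 (-x) (-y) (-z)) 0) B" for x y z B
    using lie_iso_diag3_neg that lie_iso_trans by blast
  have IX: "lie_iso (bianchi_bracket (diag3 1 1 1) 0) (bianchi_nf Bianchi_IX)"
    by (simp add: bianchi_nf_def lie_iso_refl)
  have VIII3: "lie_iso (bianchi_bracket (diag3 1 1 (-1)) 0) (bianchi_nf Bianchi_VIII)"
    by (simp add: bianchi_nf_def lie_iso_refl)
  have VIII2: "lie_iso (bianchi_bracket (diag3 1 (-1) 1) 0) (bianchi_nf Bianchi_VIII)"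
    using lie_iso_diag3_swap23[of 1 "-1" 1] VIII3 lie_iso_trans by blast
  have VIII1: "lie_iso (bianchi_bracket (diag3 (-1) 1 1) 0) (bianchi_nf Bianchi_VIII)"
    using lie_iso_diag3_swap12[of "-1" 1 1] VIII2 lie_iso_trans by blast
  have "lie_iso (bianchi_bracket (diag3 (-1) (-1) (-1)) 0) (bianchi_nf Bianchi_IX)"
    "lie_iso (bianchi_bracket (diag3 (-1) (-1) 1) 0) (bianchi_nf Bianchi_VIII)"
    "lie_iso (bianchi_bracket (diag3 (-1) 1 (-1)) 0) (bianchi_nf Bianchi_VIII)"
    "lie_iso (bianchi_bracket (diag3 1 (-1) (-1)) 0) (bianchi_nf Bianchi_VIII)"
    using neg[of "-1" "-1" "-1"] neg[of "-1" "-1" 1] neg[of "-1" 1 "-1"] neg[of 1 "-1" "-1"]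
      IX VIII1 VIII2 VIII3 by simp_all
  then show ?thesis
    using assms IX VIII1 VIII2 VIII3 by (elim disjE; simp only:; blast)
qed

lemma bianchi_class_A: "\<exists>t. lie_iso (bianchi_bracket (diag3 p q r) 0) (bianchi_nf t)"
proof (cases "p = 0 \<or> q = 0 \<or> r = 0")
  case True
  then obtain x y where "lie_iso (bianchi_bracket (diag3 p q r) 0) (bianchi_bracket (diag3 x y 0) 0)"
    using lie_iso_refl lie_iso_diag3_swap23[of p q r]
      lie_iso_trans[OF lie_iso_diag3_swap12[of p q r] lie_iso_diag3_swap23[of q p r]]
    by auto
  then show ?thesis
    using bianchi_class_A_rank_le_2 lie_iso_trans by blast
next
  case False
  then have "\<exists>t. lie_iso (bianchi_bracket (diag3 (sgn p) (sgn q) (sgn r)) 0) (bianchi_nf t)"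
    by (intro bianchi_class_A_signs) (simp_all add: sgn_real_def)
  then show ?thesis
    using False lie_iso_diag3_sgn lie_iso_trans by blast
qed

lemma bianchi_class_B:
  assumes k: "k \<noteq> 0"
  shows "\<exists>t. lie_iso (bianchi_bracket (diag3 p q 0) (vector [0, 0, k])) (bianchi_nf t)"
proof -
  have first_nonzero: "lie_iso (bianchi_bracket (diag3 x y 0) (vector [0, 0, k]))
      (bianchi_nf (Bianchi_B (x*y / (k*k))))" if "x \<noteq> 0" for x y
    unfolding bianchi_nf_def bianchi_nf_N.simps bianchi_nf_a.simps
    by (rule lie_iso_diag3_scale[of 1 "x/k" k]) (use that k in \<open>simp_all add: field_simps\<close>)
  consider "p \<noteq> 0" | "p = 0" "q \<noteq> 0" | "p = 0" "q = 0"
    by blast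
  then show ?thesis
  proof cases
    case 1
    then show ?thesis
      using first_nonzero by blast
  next
    case 2
    then show ?thesis
      using lie_iso_diag3_swap12_neg[of p q 0 k] first_nonzero[of "-q" 0] lie_iso_trans by auto
  next
    case 3
    have "lie_iso (bianchi_bracket (diag3 0 0 0) (vector [0, 0, k])) (bianchi_nf Bianchi_V)"
      unfolding bianchi_nf_def bianchi_nf_N.simps bianchi_nf_a.simps
      by (rule lie_iso_diag3_scale[of 1 1 k]) (use k in simp_all)
    then show ?thesis
      using 3 by blast
  qed
qed

lemma symmetric_inner_commute:
  fixes N :: "real^'n^'n"
  assumes "transpose N = N"
  shows "f \<bullet> (N *v g) = g \<bullet> (N *v f)"
  by (metis assms dot_lmul_matrix inner_commute transpose_matrix_vector)

lemma symmetric_quadratic_form_eq_0: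
  fixes N :: "real^3^3"
  assumes "transpose N = N" and "\<And>v. v \<bullet> (N *v v) = 0"
  shows "N = 0"
proof -
  have "N$1$1 = 0" "N$2$2 = 0" "N$3$3 = 0"
    "N$1$1 + N$1$2 + N$2$1 + N$2$2 = 0" "N$1$1 + N$1$3 + N$3$1 + N$3$3 = 0"
    "N$2$2 + N$2$3 + N$3$2 + N$3$3 = 0"
    using assms(2)[of "vector [1, 0, 0]"] assms(2)[of "vector [0, 1, 0]"]
      assms(2)[of "vector [0, 0, 1]"] assms(2)[of "vector [1, 1, 0]"]
      assms(2)[of "vector [1, 0, 1]"] assms(2)[of "vector [0, 1, 1]"]
    by (simp_all add: matrix_vector_mult_def inner_vec_def sum_3 algebra_simps)
  then show ?thesis
    using symmetric_matrix3_entries[OF assms(1)] by (simp add: vec_eq_iff forall_3)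
qed

lemma orthogonal_pair_cross:
  fixes w :: "real^3"
  assumes "w \<noteq> 0"
  obtains g1 g2 where "g1 \<bullet> w = 0" "g2 \<bullet> w = 0" "g1 \<times> g2 = (g1 \<bullet> g1) *\<^sub>R w" "g1 \<noteq> 0"
proof -
  obtain e where e: "w \<times> e \<noteq> 0"
    using cross_basis_nonzero[OF assms] by blast
  let ?g1 = "w \<times> e"
  have o1: "?g1 \<bullet> w = 0" and o2: "(w \<times> ?g1) \<bullet> w = 0"
    by (simp_all add: dot_cross_self inner_commute)
  have "?g1 \<times> (w \<times> ?g1) = (?g1 \<bullet> ?g1) *\<^sub>R w"
    by (simp only: Lagrange[of ?g1 w ?g1] o1) simp
  then show thesis
    using that o1 o2 e by blast
qed

text \<open>Gram--Schmidt for the form \<open>N\<close> on a plane \<open>N\<close>-orthogonal to \<open>v\<close>, which may be degenerate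
  or isotropic.\<close>
lemma symmetric_form_orthogonal_pair:
  fixes N :: "real^3^3"
  assumes sym: "transpose N = N" and d: "(g1 \<times> g2) \<bullet> v \<noteq> 0"
    and o1: "g1 \<bullet> (N *v v) = 0" and o2: "g2 \<bullet> (N *v v) = 0"
  obtains f1 f2 where "(f1 \<times> f2) \<bullet> v \<noteq> 0" "f1 \<bullet> (N *v f2) = 0" "f1 \<bullet> (N *v v) = 0" "f2 \<bullet> (N *v v) = 0"
proof -
  note result = that
  define p where "p = g1 \<bullet> (N *v g1)"
  define r where "r = g1 \<bullet> (N *v g2)"
  define q where "q = g2 \<bullet> (N *v g2)"
  have r': "g2 \<bullet> (N *v g1) = r"
    unfolding r_def by (rule symmetric_inner_commute[OF sym])
  have combine: thesis if "\<alpha>*\<delta> - \<beta>*\<gamma> \<noteq> 0" "\<alpha>*\<gamma>*p + \<alpha>*\<delta>*r + \<beta>*\<gamma>*r + \<beta>*\<delta>*q = 0"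
    for \<alpha> \<beta> \<gamma> \<delta>
  proof (rule result)
    let ?f1 = "\<alpha> *\<^sub>R g1 + \<beta> *\<^sub>R g2" and ?f2 = "\<gamma> *\<^sub>R g1 + \<delta> *\<^sub>R g2"
    have "?f1 \<times> ?f2 = (\<alpha>*\<delta> - \<beta>*\<gamma>) *\<^sub>R (g1 \<times> g2)"
      by (simp add: cross3_def vec_eq_iff forall_3 algebra_simps)
    then show "(?f1 \<times> ?f2) \<bullet> v \<noteq> 0"
      using that(1) d by simp
    show "?f1 \<bullet> (N *v ?f2) = 0"
      using that(2)
      by (simp add: matrix_vector_right_distrib matrix_vector_mult_scaleR inner_add_left
          inner_add_right r' flip: p_def q_def r_def) (simp add: algebra_simps)
    show "?f1 \<bullet> (N *v v) = 0" "?f2 \<bullet> (N *v v) = 0"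
      using o1 o2 by (simp_all add: inner_add_left)
  qed
  consider "p \<noteq> 0" | "p = 0" "q \<noteq> 0" | "p = 0" "q = 0"
    by blast
  then show thesis
  proof cases
    case 1
    then show thesis
      by (intro combine[where \<alpha>=1 and \<beta>=0 and \<gamma>="-r" and \<delta>=p]) (simp_all add: algebra_simps)
  next
    case 2
    then show thesis
      by (intro combine[where \<alpha>=0 and \<beta>=1 and \<gamma>=q and \<delta>="-r"]) (simp_all add: algebra_simps)
  next
    case 3
    then show thesis
      by (intro combine[where \<alpha>=1 and \<beta>=1 and \<gamma>=1 and \<delta>="-1"]) (simp_all add: algebra_simps)
  qed
qed

lemma symmetric_form_adapted_basis:
  fixes N :: "real^3^3"
  assumes sym: "transpose N = N" and v: "v \<noteq> 0" and Nv: "N *v v = 0 \<or> v \<bullet> (N *v v) \<noteq> 0"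
  obtains f1 f2 where "(f1 \<times> f2) \<bullet> v \<noteq> 0" "f1 \<bullet> (N *v f2) = 0" "f1 \<bullet> (N *v v) = 0" "f2 \<bullet> (N *v v) = 0"
proof -
  define w where "w = (if N *v v = 0 then v else N *v v)"
  have wv: "w \<bullet> v \<noteq> 0"
    using v Nv by (auto simp: w_def inner_commute)
  then have "w \<noteq> 0"
    by auto
  then obtain g1 g2 where g: "g1 \<bullet> w = 0" "g2 \<bullet> w = 0" "g1 \<times> g2 = (g1 \<bullet> g1) *\<^sub>R w" "g1 \<noteq> 0"
    by (rule orthogonal_pair_cross)
  have "(g1 \<times> g2) \<bullet> v \<noteq> 0"
    using g(3,4) wv by simp
  moreover have "g1 \<bullet> (N *v v) = 0" "g2 \<bullet> (N *v v) = 0"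
    using g(1,2) by (auto simp: w_def split: if_splits)
  ultimately show thesis
    using symmetric_form_orthogonal_pair[OF sym] that by blast
qed

lemma symmetric_form_adapted_vector:
  fixes N :: "real^3^3"
  assumes sym: "transpose N = N" and Na: "N *v a = 0"
  obtains v k where "v \<noteq> 0" "N *v v = 0 \<or> v \<bullet> (N *v v) \<noteq> 0" "a = k *\<^sub>R v"
proof (cases "a = 0")
  case False
  then show thesis
    using that[of a 1] Na by simp
next
  case True
  show thesis
  proof (cases "\<exists>v. v \<bullet> (N *v v) \<noteq> 0")
    case False
    then have "N = 0"
      using symmetric_quadratic_form_eq_0[OF sym] by blast
    then show thesis
      using that[of "vector [1, 0, 0]" 0] \<open>a = 0\<close> by simp
  next
    case True
    then obtain v where "v \<bullet> (N *v v) \<noteq> 0"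
      by blast
    moreover from this have "v \<noteq> 0"
      by auto
    ultimately show thesis
      using that[of v 0] \<open>a = 0\<close> by simp
  qed
qed

lemma symmetric_matrix_congruent_diagonal:
  fixes N :: "real^3^3"
  assumes sym: "transpose N = N" and Na: "N *v a = 0"
  obtains M :: "real^3^3" and k where "invertible M" "vector [0, 0, k] v* M = a"
    "\<And>i j. i \<noteq> j \<Longrightarrow> (M ** N ** transpose M) $ i $ j = 0"
proof -
  obtain v k where v: "v \<noteq> 0" "N *v v = 0 \<or> v \<bullet> (N *v v) \<noteq> 0" "a = k *\<^sub>R v"
    using symmetric_form_adapted_vector[OF sym Na] by blast
  obtain f1 f2 where f: "(f1 \<times> f2) \<bullet> v \<noteq> 0" "f1 \<bullet> (N *v f2) = 0" "f1 \<bullet> (N *v v) = 0"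
    "f2 \<bullet> (N *v v) = 0"
    using symmetric_form_adapted_basis[OF sym v(1,2)] by blast
  let ?M = "vector [f1, f2, v] :: real^3^3"
  show thesis
  proof (rule that[of ?M k])
    have "det ?M = f1 \<bullet> (f2 \<times> v)"
      by (simp add: dot_cross_det)
    also have "\<dots> = (f1 \<times> f2) \<bullet> v"
      by (metis cross_triple inner_commute)
    finally have "det ?M = (f1 \<times> f2) \<bullet> v" .
    then show "invertible ?M"
      using f(1) by (simp add: invertible_det_nz)
    show "vector [0, 0, k] v* ?M = a"
      using v(3) by (simp add: vec_eq_iff forall_3 vector_matrix_mult_def sum_3)
    have entry: "(?M ** N ** transpose ?M) $ i $ j = (?M $ i) \<bullet> (N *v (?M $ j))" for i j
      by (simp add: matrix_matrix_mult_def matrix_vector_mult_def inner_vec_def transpose_def sum_3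
          algebra_simps)
    have "f2 \<bullet> (N *v f1) = 0" "v \<bullet> (N *v f1) = 0" "v \<bullet> (N *v f2) = 0"
      using f(2-4) symmetric_inner_commute[OF sym] by metis+
    then show "(?M ** N ** transpose ?M) $ i $ j = 0" if "i \<noteq> j" for i j
      using that f(2-4) exhaust_3[of i] exhaust_3[of j] unfolding entry by auto
  qed
qed

theorem bianchi_classification:
  assumes "lie_bracket br"
  obtains t where "lie_iso br (bianchi_nf t)"
proof -
  let ?N = "bianchi_N br" and ?a = "bianchi_a br"
  obtain M :: "real^3^3" and k where M: "invertible M" "vector [0, 0, k] v* M = ?a"
    "\<And>i j. i \<noteq> j \<Longrightarrow> (M ** ?N ** transpose M) $ i $ j = 0"
    using symmetric_matrix_congruent_diagonal[OF symmetric_bianchi_N lie_bracket_bianchi_N_a[OF assms]]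
    by blast
  define D where "D = (1 / det M) *\<^sub>R (M ** ?N ** transpose M)"
  have iso: "lie_iso br (bianchi_bracket D (vector [0, 0, k]))"
    using lie_iso_bianchi_bracket_congruence[OF M(1,2)] lie_bracket_eq_bianchi_bracket[OF assms]
    unfolding D_def by metis
  have D: "D = diag3 (D$1$1) (D$2$2) (D$3$3)"
    using M(3) by (simp add: D_def vec_eq_iff forall_3)
  have "D *v vector [0, 0, k] = (1 / det M) *\<^sub>R (M *v (?N *v ?a))"
    by (simp add: D_def M(2)[symmetric] matrix_vector_mul_assoc matrix_mul_assoc scaleR_matrix_vector_assoc
        flip: transpose_matrix_vector)
  also have "\<dots> = 0"
    using lie_bracket_bianchi_N_a[OF assms] by simp
  finally have "D$3$3 * k = 0"
    by (subst (asm) D) (simp add: vec_eq_iff forall_3 matrix_vector_mult_def sum_3)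
  then have "\<exists>t. lie_iso (bianchi_bracket D (vector [0, 0, k])) (bianchi_nf t)"
    using bianchi_class_A[of "D$1$1" "D$2$2" "D$3$3"] bianchi_class_B[of k "D$1$1" "D$2$2"] D
    by (cases "k = 0") auto
  then show thesis
    using iso lie_iso_trans that by blast
qed

section \<open>Closed invariants of contractions\<close>

definition bianchi_N_change :: "real^3^3 \<Rightarrow> real^3^3 \<Rightarrow> real^3^3" where
  "bianchi_N_change U N = det U *\<^sub>R (matrix_inv U ** N ** transpose (matrix_inv U))"

lemma change_basis_bianchi_bracket_invertible:
  "invertible U \<Longrightarrow> change_basis U (bianchi_bracket N a) = bianchi_bracket (bianchi_N_change U N) (a v* U)"
  by (simp add: bianchi_N_change_def change_basis_bianchi_bracket matrix_inv_right)

lemma symmetric_congruence: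
  fixes N M :: "real^'n^'n"
  assumes "transpose N = N"
  shows "transpose (c *\<^sub>R (M ** N ** transpose M)) = c *\<^sub>R (M ** N ** transpose M)"
  by (simp add: transpose_scalar matrix_transpose_mul matrix_mul_assoc assms)

lemma symmetric_bianchi_N_change: "transpose N = N \<Longrightarrow> transpose (bianchi_N_change U N) = bianchi_N_change U N"
  unfolding bianchi_N_change_def by (rule symmetric_congruence)

definition adjugate3 :: "real^3^3 \<Rightarrow> real^3^3" where
  "adjugate3 X = vector [
     vector [X$2$2*X$3$3 - X$2$3*X$3$2, X$1$3*X$3$2 - X$1$2*X$3$3, X$1$2*X$2$3 - X$1$3*X$2$2],
     vector [X$2$3*X$3$1 - X$2$1*X$3$3, X$1$1*X$3$3 - X$1$3*X$3$1, X$1$3*X$2$1 - X$1$1*X$2$3],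
     vector [X$2$1*X$3$2 - X$2$2*X$3$1, X$1$2*X$3$1 - X$1$1*X$3$2, X$1$1*X$2$2 - X$1$2*X$2$1]]"

lemma adjugate3_mult: "adjugate3 (X ** Y) = adjugate3 Y ** adjugate3 X"
  by (simp add: adjugate3_def vec3_simps) (auto simp: algebra_simps)

lemma adjugate3_transpose: "adjugate3 (transpose X) = transpose (adjugate3 X)"
  by (simp add: adjugate3_def vec3_simps)

lemma adjugate3_scaleR: "adjugate3 (c *\<^sub>R X) = (c*c) *\<^sub>R adjugate3 X"
  by (simp add: adjugate3_def vec3_simps) (auto simp: algebra_simps)

lemma adjugate3_mult_self: "adjugate3 X ** X = det X *\<^sub>R mat 1"
  by (simp add: adjugate3_def vec3_simps) (auto simp: algebra_simps)

lemma adjugate3_diag3 [simp]: "adjugate3 (diag3 p q r) = diag3 (q*r) (p*r) (p*q)"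
  by (simp add: adjugate3_def vec_eq_iff forall_3)

lemma adjugate3_eq_det_inverse:
  assumes "M ** U = mat 1"
  shows "adjugate3 M = det M *\<^sub>R U"
proof -
  have "adjugate3 M = adjugate3 M ** (M ** U)"
    by (simp add: assms)
  also have "\<dots> = (adjugate3 M ** M) ** U"
    by (simp add: matrix_mul_assoc)
  finally show ?thesis
    by (simp add: adjugate3_mult_self flip: scalar_matrix_assoc)
qed

lemma det_scaleR3: "det (c *\<^sub>R (X::real^3^3)) = c^3 * det X"
  by (simp add: vec3_simps) (auto simp: algebra_simps power3_eq_cube)

text \<open>The adjugate of \<open>N\<close> transforms by a plain congruence, without the determinant
  factor; this makes its sign behaviour an invariant.\<close>
lemma adjugate3_bianchi_N_change:
  assumes "invertible U"
  shows "adjugate3 (bianchi_N_change U N) = transpose U ** adjugate3 N ** U"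
proof -
  let ?M = "matrix_inv U"
  have d: "det U * det ?M = 1"
    by (metis assms det_I det_mul matrix_inv_right)
  have "adjugate3 (bianchi_N_change U N) =
      (det U * det U) *\<^sub>R (adjugate3 (transpose ?M) ** (adjugate3 N ** adjugate3 ?M))"
    by (simp add: bianchi_N_change_def adjugate3_scaleR adjugate3_mult)
  also have "\<dots> = ((det U * det ?M) * (det U * det ?M)) *\<^sub>R (transpose U ** adjugate3 N ** U)"
    by (simp add: adjugate3_transpose adjugate3_eq_det_inverse[OF matrix_inv_left[OF assms]]
        transpose_scalar matrix_scalar_ac matrix_mul_assoc scalar_matrix_assoc algebra_simps)
  finally show ?thesis
    by (simp add: d)
qed

lemma det_bianchi_N_change:
  assumes "invertible U"
  shows "det (bianchi_N_change U N) = det U * det N"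
proof -
  let ?M = "matrix_inv U"
  have d: "det U * det ?M = 1"
    by (metis assms det_I det_mul matrix_inv_right)
  have "det (bianchi_N_change U N) = det U * (det U * det ?M) * (det U * det ?M) * det N"
    by (simp add: bianchi_N_change_def det_scaleR3 det_mul power3_eq_cube algebra_simps)
  then show ?thesis
    by (simp add: d)
qed

definition outer_prod :: "real^3 \<Rightarrow> real^3^3" where
  "outer_prod a = (\<chi> i j. a$i * a$j)"

lemma outer_prod_vector_matrix: "outer_prod (a v* U) = transpose U ** outer_prod a ** U"
  by (simp add: outer_prod_def vec3_simps) (auto simp: algebra_simps sum_distrib_left)

lemma outer_prod_0 [simp]: "outer_prod 0 = 0"
  by (simp add: outer_prod_def vec_eq_iff)

lemma outer_prod_e3 [simp]: "outer_prod (vector [0, 0, k]) = diag3 0 0 (k*k)"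
  by (simp add: outer_prod_def vec_eq_iff forall_3)

definition quad_form :: "real^'n^'n \<Rightarrow> real^'n \<Rightarrow> real" where
  "quad_form N v = v \<bullet> (N *v v)"

definition pos_semidef :: "real^'n^'n \<Rightarrow> bool" where
  "pos_semidef N \<longleftrightarrow> (\<forall>v. quad_form N v \<ge> 0)"

definition neg_semidef :: "real^'n^'n \<Rightarrow> bool" where
  "neg_semidef N \<longleftrightarrow> (\<forall>v. quad_form N v \<le> 0)"

lemma quad_form_congruence:
  fixes N M :: "real^'n^'n"
  shows "quad_form (c *\<^sub>R (M ** N ** transpose M)) v = c * quad_form N (v v* M)"
  by (simp add: quad_form_def dot_lmul_matrix matrix_vector_mul_assoc[symmetric]
      flip: scaleR_matrix_vector_assoc)

lemma quad_form_transpose_congruence: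
  fixes X U :: "real^'n^'n"
  shows "quad_form (transpose U ** X ** U) v = quad_form X (U *v v)"
proof -
  have "v \<bullet> (transpose U *v (X *v (U *v v))) = (U *v v) \<bullet> (X *v (U *v v))"
    by (metis dot_lmul_matrix vector_transpose_matrix)
  then show ?thesis
    by (simp add: quad_form_def matrix_vector_mul_assoc matrix_mul_assoc)
qed

lemma quad_form_diag3: "quad_form (diag3 p q r) v = p * (v$1 * v$1) + q * (v$2 * v$2) + r * (v$3 * v$3)"
  by (simp add: quad_form_def vec3_simps)

lemma pos_semidef_diag3 [simp]: "pos_semidef (diag3 p q r) \<longleftrightarrow> p \<ge> 0 \<and> q \<ge> 0 \<and> r \<ge> 0"
proof
  assume "pos_semidef (diag3 p q r)"
  then have "0 \<le> quad_form (diag3 p q r) (vector [1, 0, 0])"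
    "0 \<le> quad_form (diag3 p q r) (vector [0, 1, 0])" "0 \<le> quad_form (diag3 p q r) (vector [0, 0, 1])"
    unfolding pos_semidef_def by blast+
  then show "p \<ge> 0 \<and> q \<ge> 0 \<and> r \<ge> 0"
    by (simp add: quad_form_diag3)
qed (auto simp: pos_semidef_def quad_form_diag3)

lemma neg_semidef_diag3 [simp]: "neg_semidef (diag3 p q r) \<longleftrightarrow> p \<le> 0 \<and> q \<le> 0 \<and> r \<le> 0"
proof
  assume "neg_semidef (diag3 p q r)"
  then have "quad_form (diag3 p q r) (vector [1, 0, 0]) \<le> 0"
    "quad_form (diag3 p q r) (vector [0, 1, 0]) \<le> 0" "quad_form (diag3 p q r) (vector [0, 0, 1]) \<le> 0"
    unfolding neg_semidef_def by blast+
  then show "p \<le> 0 \<and> q \<le> 0 \<and> r \<le> 0"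
    by (simp add: quad_form_diag3)
qed (auto simp: neg_semidef_def quad_form_diag3 mult_nonpos_nonneg intro!: add_nonpos_nonpos)

lemma quad_form_pos_near_identity:
  fixes X :: "real^'n^'n"
  assumes "onorm ((*v) (X - mat 1)) < 1" and "w \<noteq> 0"
  shows "quad_form X w > 0"
proof -
  have "\<bar>w \<bullet> ((X - mat 1) *v w)\<bar> \<le> norm w * norm ((X - mat 1) *v w)"
    by (rule Cauchy_Schwarz_ineq2)
  also have "\<dots> \<le> norm w * (onorm ((*v) (X - mat 1)) * norm w)"
    by (intro mult_left_mono onorm) simp_all
  also have "\<dots> < norm w * norm w"
    using assms by simp
  finally have "\<bar>w \<bullet> ((X - mat 1) *v w)\<bar> < w \<bullet> w"
    by (simp add: power2_norm_eq_inner[symmetric] power2_eq_square)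
  moreover have "quad_form X w = w \<bullet> w + w \<bullet> ((X - mat 1) *v w)"
    by (simp add: quad_form_def matrix_vector_mult_diff_rdistrib inner_diff_right)
  ultimately show ?thesis
    by linarith
qed

lemma eventually_onorm_diff_mat_1_less_1:
  fixes X :: "'b \<Rightarrow> real^'n^'n"
  assumes "(X \<longlongrightarrow> mat 1) F"
  shows "\<forall>\<^sub>F x in F. onorm ((*v) (X x - mat 1)) < 1"
proof -
  define e where "e = 1 / (2 * real CARD('n) * real CARD('n))"
  have "e > 0"
    by (simp add: e_def)
  have entries: "((\<lambda>x. (X x - mat 1) $ i $ j) \<longlongrightarrow> 0) F" for i j
    using assms by (auto intro!: tendsto_eq_intros)
  have "\<forall>\<^sub>F x in F. \<bar>(X x - mat 1) $ i $ j\<bar> \<le> e" for i j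
    using tendstoD[OF entries[of i j] \<open>e > 0\<close>] by (auto simp: dist_real_def elim!: eventually_mono)
  then have "\<forall>\<^sub>F x in F. \<forall>i j. \<bar>(X x - mat 1) $ i $ j\<bar> \<le> e"
    by (intro eventually_all_finite) simp_all
  then show ?thesis
  proof (rule eventually_mono)
    fix x
    assume "\<forall>i j. \<bar>(X x - mat 1) $ i $ j\<bar> \<le> e"
    then have "onorm ((*v) (X x - mat 1)) \<le> real CARD('n) * real CARD('n) * e"
      by (intro onorm_le_matrix_component) blast
    also have "\<dots> < 1"
      by (simp add: e_def)
    finally show "onorm ((*v) (X x - mat 1)) < 1" .
  qed
qed

lemma tendsto_vector3:
  fixes f g h :: "'b \<Rightarrow> 'a::{zero, topological_space}"
  assumes "(f \<longlongrightarrow> a) F" and "(g \<longlongrightarrow> b) F" and "(h \<longlongrightarrow> c) F"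
  shows "((\<lambda>x. vector [f x, g x, h x] :: 'a^3) \<longlongrightarrow> vector [a, b, c]) F"
proof (rule vec_tendstoI)
  fix i :: 3
  show "((\<lambda>x. (vector [f x, g x, h x] :: 'a^3) $ i) \<longlongrightarrow> (vector [a, b, c] :: 'a^3) $ i) F"
    using exhaust_3[of i] assms by auto
qed

lemma tendsto_transpose [tendsto_intros]:
  fixes X :: "'b \<Rightarrow> real^'n^'m"
  shows "(X \<longlongrightarrow> X0) F \<Longrightarrow> ((\<lambda>x. transpose (X x)) \<longlongrightarrow> transpose X0) F"
  unfolding transpose_def by (intro tendsto_intros)

lemma tendsto_adjugate3:
  "(X \<longlongrightarrow> X0) F \<Longrightarrow> ((\<lambda>x. adjugate3 (X x)) \<longlongrightarrow> adjugate3 X0) F"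
  unfolding adjugate3_def by (intro tendsto_vector3 tendsto_intros)

lemma tendsto_det3:
  fixes X :: "'b \<Rightarrow> real^3^3"
  shows "(X \<longlongrightarrow> X0) F \<Longrightarrow> ((\<lambda>x. det (X x)) \<longlongrightarrow> det X0) F"
  unfolding det_3 by (intro tendsto_intros)

lemma tendsto_outer_prod:
  "(Y \<longlongrightarrow> Y0) F \<Longrightarrow> ((\<lambda>x. outer_prod (Y x)) \<longlongrightarrow> outer_prod Y0) F"
  unfolding outer_prod_def by (intro tendsto_intros)

lemma tendsto_quad_form:
  fixes X :: "'b \<Rightarrow> real^'n^'n"
  shows "(X \<longlongrightarrow> X0) F \<Longrightarrow> ((\<lambda>x. quad_form (X x) v) \<longlongrightarrow> quad_form X0 v) F"
  unfolding quad_form_def matrix_vector_mult_def by (intro tendsto_intros)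

lemma tendsto_structure_matrix:
  assumes "\<And>x y. ((\<lambda>\<epsilon>. br \<epsilon> x y) \<longlongrightarrow> br0 x y) F"
  shows "((\<lambda>\<epsilon>. structure_matrix (br \<epsilon>)) \<longlongrightarrow> structure_matrix br0) F"
  unfolding structure_matrix_def by (intro tendsto_vector3 assms)

lemma tendsto_bianchi_N:
  assumes "\<And>x y. ((\<lambda>\<epsilon>. br \<epsilon> x y) \<longlongrightarrow> br0 x y) F"
  shows "((\<lambda>\<epsilon>. bianchi_N (br \<epsilon>)) \<longlongrightarrow> bianchi_N br0) F"
  unfolding bianchi_N_def by (intro tendsto_intros tendsto_structure_matrix assms)

lemma tendsto_bianchi_a:
  assumes "\<And>x y. ((\<lambda>\<epsilon>. br \<epsilon> x y) \<longlongrightarrow> br0 x y) F"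
  shows "((\<lambda>\<epsilon>. bianchi_a (br \<epsilon>)) \<longlongrightarrow> bianchi_a br0) F"
  unfolding bianchi_a_def Let_def
  by (intro tendsto_intros tendsto_vector3 tendsto_structure_matrix assms)

lemma tendsto_unique_eventually:
  fixes f g :: "'b \<Rightarrow> 'a::t2_space"
  assumes "F \<noteq> bot" and "(f \<longlongrightarrow> l) F" and "(g \<longlongrightarrow> m) F" and "\<forall>\<^sub>F x in F. f x = g x"
  shows "l = m"
  using tendsto_unique[OF assms(1) Lim_transform_eventually[OF assms(2,4)] assms(3)] .

locale bianchi_contraction =
  fixes N a N0 a0 and U :: "real \<Rightarrow> real^3^3"
  assumes contracts: "contracts_via (bianchi_bracket N a) U (bianchi_bracket N0 a0)"
    and symmetric: "transpose N = N" "transpose N0 = N0"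
begin

lemma eventually_invertible: "\<forall>\<^sub>F \<epsilon> in at_right 0. invertible (U \<epsilon>)"
  using contracts by (rule contracts_via_eventually_invertible)

lemma eventually_change_basis:
  "\<forall>\<^sub>F \<epsilon> in at_right 0. change_basis (U \<epsilon>) (bianchi_bracket N a) =
     bianchi_bracket (bianchi_N_change (U \<epsilon>) N) (a v* U \<epsilon>)"
  using eventually_invertible by (rule eventually_mono) (rule change_basis_bianchi_bracket_invertible)

lemma tendsto_change_basis:
  "((\<lambda>\<epsilon>. change_basis (U \<epsilon>) (bianchi_bracket N a) x y) \<longlongrightarrow> bianchi_bracket N0 a0 x y) (at_right 0)"
  using contracts unfolding contracts_via_iff_change_basis by blast

lemma tendsto_N: "((\<lambda>\<epsilon>. bianchi_N_change (U \<epsilon>) N) \<longlongrightarrow> N0) (at_right 0)"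
proof -
  have "((\<lambda>\<epsilon>. bianchi_N (change_basis (U \<epsilon>) (bianchi_bracket N a))) \<longlongrightarrow> N0) (at_right 0)"
    using tendsto_bianchi_N[of "\<lambda>\<epsilon>. change_basis (U \<epsilon>) (bianchi_bracket N a)", OF tendsto_change_basis] by (simp add: bianchi_N_bianchi_bracket symmetric(2))
  moreover have "\<forall>\<^sub>F \<epsilon> in at_right 0.
      bianchi_N (change_basis (U \<epsilon>) (bianchi_bracket N a)) = bianchi_N_change (U \<epsilon>) N"
    using eventually_change_basis
    by (rule eventually_mono) (simp add: bianchi_N_bianchi_bracket symmetric_bianchi_N_change symmetric)
  ultimately show ?thesis
    by (rule Lim_transform_eventually)
qed

lemma tendsto_a: "((\<lambda>\<epsilon>. a v* U \<epsilon>) \<longlongrightarrow> a0) (at_right 0)"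
proof -
  have "((\<lambda>\<epsilon>. bianchi_a (change_basis (U \<epsilon>) (bianchi_bracket N a))) \<longlongrightarrow> a0) (at_right 0)"
    using tendsto_bianchi_a[of "\<lambda>\<epsilon>. change_basis (U \<epsilon>) (bianchi_bracket N a)", OF tendsto_change_basis] by (simp add: bianchi_a_bianchi_bracket symmetric(2))
  moreover have "\<forall>\<^sub>F \<epsilon> in at_right 0.
      bianchi_a (change_basis (U \<epsilon>) (bianchi_bracket N a)) = a v* U \<epsilon>"
    using eventually_change_basis
    by (rule eventually_mono) (simp add: bianchi_a_bianchi_bracket symmetric_bianchi_N_change symmetric)
  ultimately show ?thesis
    by (rule Lim_transform_eventually)
qed

lemma a_eq_0: "a = 0 \<Longrightarrow> a0 = 0"
  using tendsto_a by (simp add: tendsto_const_iff)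

lemma N_eq_0: "N = 0 \<Longrightarrow> N0 = 0"
  using tendsto_N by (simp add: bianchi_N_change_def tendsto_const_iff)

lemma adjugate_eq_outer_prod:
  assumes "adjugate3 N = c *\<^sub>R outer_prod a"
  shows "adjugate3 N0 = c *\<^sub>R outer_prod a0"
proof (rule tendsto_unique_eventually)
  show "((\<lambda>\<epsilon>. adjugate3 (bianchi_N_change (U \<epsilon>) N)) \<longlongrightarrow> adjugate3 N0) (at_right 0)"
    by (rule tendsto_adjugate3[OF tendsto_N])
  show "((\<lambda>\<epsilon>. c *\<^sub>R outer_prod (a v* U \<epsilon>)) \<longlongrightarrow> c *\<^sub>R outer_prod a0) (at_right 0)"
    by (intro tendsto_scaleR tendsto_const tendsto_outer_prod tendsto_a)
  show "\<forall>\<^sub>F \<epsilon> in at_right 0. adjugate3 (bianchi_N_change (U \<epsilon>) N) = c *\<^sub>R outer_prod (a v* U \<epsilon>)"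
    using eventually_invertible
    by (rule eventually_mono)
      (simp add: adjugate3_bianchi_N_change assms outer_prod_vector_matrix matrix_scalar_ac
        scalar_matrix_assoc)
qed simp

lemma det_eq_0: "det N = 0 \<Longrightarrow> det N0 = 0"
  using tendsto_det3[OF tendsto_N] eventually_invertible
  by (intro tendsto_unique_eventually[OF _ _ tendsto_const])
    (auto elim: eventually_mono simp: det_bianchi_N_change)

lemma semidefinite:
  assumes "pos_semidef N \<or> neg_semidef N"
  shows "pos_semidef N0 \<or> neg_semidef N0"
proof (rule ccontr)
  assume "\<not> ?thesis"
  then obtain v w where v: "quad_form N0 v < 0" and w: "quad_form N0 w > 0"
    by (auto simp: pos_semidef_def neg_semidef_def not_le)
  have "\<forall>\<^sub>F \<epsilon> in at_right 0. invertible (U \<epsilon>) \<and>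
      quad_form (bianchi_N_change (U \<epsilon>) N) v < 0 \<and> quad_form (bianchi_N_change (U \<epsilon>) N) w > 0"
    using eventually_invertible order_tendstoD(2)[OF tendsto_quad_form[OF tendsto_N] v]
      order_tendstoD(1)[OF tendsto_quad_form[OF tendsto_N] w]
    by eventually_elim blast
  then have "\<forall>\<^sub>F \<epsilon> in at_right (0::real). False"
  proof (rule eventually_mono)
    fix \<epsilon>
    let ?d = "det (U \<epsilon>)" and ?M = "matrix_inv (U \<epsilon>)"
    assume "invertible (U \<epsilon>) \<and> quad_form (bianchi_N_change (U \<epsilon>) N) v < 0 \<and>
      quad_form (bianchi_N_change (U \<epsilon>) N) w > 0"
    then have "?d * quad_form N (v v* ?M) < 0" "?d * quad_form N (w v* ?M) > 0"
      by (simp_all add: bianchi_N_change_def quad_form_congruence)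
    moreover have "(quad_form N (v v* ?M) \<ge> 0 \<and> quad_form N (w v* ?M) \<ge> 0) \<or>
        (quad_form N (v v* ?M) \<le> 0 \<and> quad_form N (w v* ?M) \<le> 0)"
      using assms by (auto simp: pos_semidef_def neg_semidef_def)
    ultimately show False
      by (auto simp: mult_less_0_iff zero_less_mult_iff)
  qed
  then show False
    by (simp add: eventually_False)
qed

lemma adjugate_neg_semidef:
  assumes "neg_semidef (adjugate3 N)"
  shows "neg_semidef (adjugate3 N0)"
  unfolding neg_semidef_def
proof
  fix v
  have "\<forall>\<^sub>F \<epsilon> in at_right 0. quad_form (adjugate3 (bianchi_N_change (U \<epsilon>) N)) v \<le> 0"
    using eventually_invertible
    by (rule eventually_mono)
      (use assms in \<open>simp add: adjugate3_bianchi_N_change quad_form_transpose_congruence neg_semidef_def\<close>)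
  then show "quad_form (adjugate3 N0) v \<le> 0"
    using tendsto_upperbound[OF tendsto_quad_form[OF tendsto_adjugate3[OF tendsto_N]]] by simp
qed

text \<open>Congruence preserves isotropic vectors, while matrices close to the identity are
  positive definite.\<close>
lemma isotropic_not_identity:
  assumes "quad_form N v = 0" and "v \<noteq> 0"
  shows "N0 \<noteq> mat 1"
proof
  assume N0: "N0 = mat 1"
  have "\<forall>\<^sub>F \<epsilon> in at_right 0. invertible (U \<epsilon>) \<and> onorm ((*v) (bianchi_N_change (U \<epsilon>) N - mat 1)) < 1"
    using eventually_invertible eventually_onorm_diff_mat_1_less_1[OF tendsto_N[unfolded N0]]
    by (rule eventually_conj)
  then have "\<forall>\<^sub>F \<epsilon> in at_right (0::real). False"
  proof (rule eventually_mono)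
    fix \<epsilon>
    assume H: "invertible (U \<epsilon>) \<and> onorm ((*v) (bianchi_N_change (U \<epsilon>) N - mat 1)) < 1"
    let ?w = "v v* U \<epsilon>"
    have undo: "?w v* matrix_inv (U \<epsilon>) = v"
      using H by (simp add: vector_matrix_mul_assoc matrix_inv_right)
    then have "?w \<noteq> 0"
      using assms(2) by auto
    then have "quad_form (bianchi_N_change (U \<epsilon>) N) ?w > 0"
      using H quad_form_pos_near_identity by blast
    moreover have "quad_form (bianchi_N_change (U \<epsilon>) N) ?w = 0"
      using assms(1) undo by (simp add: bianchi_N_change_def quad_form_congruence)
    ultimately show False
      by simp
  qed
  then show False
    by (simp add: eventually_False)
qed

end

section \<open>Degenerations between normal forms\<close>

definition degenerates_to :: "bianchi_type \<Rightarrow> bianchi_type \<Rightarrow> bool" where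
  "degenerates_to t t0 \<longleftrightarrow> t0 = t \<or> t0 = Bianchi_I \<or>
     (t0 = Bianchi_II \<and> t \<noteq> Bianchi_I \<and> t \<noteq> Bianchi_V) \<or>
     (t, t0) \<in> {(Bianchi_IX, Bianchi_VII0), (Bianchi_VIII, Bianchi_VII0), (Bianchi_VIII, Bianchi_VI0),
       (Bianchi_B 0, Bianchi_V)}"

lemma degenerates_to_antisym: "degenerates_to t t0 \<Longrightarrow> degenerates_to t0 t \<Longrightarrow> t = t0"
  by (auto simp: degenerates_to_def)

lemma contracts_via_bianchi_nf_degenerates_to:
  assumes "contracts_via (bianchi_nf t) U (bianchi_nf t0)"
  shows "degenerates_to t t0"
proof -
  interpret bianchi_contraction "bianchi_nf_N t" "bianchi_nf_a t" "bianchi_nf_N t0" "bianchi_nf_a t0" U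
    using assms by unfold_locales (simp_all add: bianchi_nf_def)
  define c where "c = (case t of Bianchi_B c \<Rightarrow> c | _ \<Rightarrow> 0)"
  have "bianchi_nf_a t = 0 \<longrightarrow> bianchi_nf_a t0 = 0"
    and "bianchi_nf_N t = 0 \<longrightarrow> bianchi_nf_N t0 = 0"
    and "adjugate3 (bianchi_nf_N t) = c *\<^sub>R outer_prod (bianchi_nf_a t) \<longrightarrow>
      adjugate3 (bianchi_nf_N t0) = c *\<^sub>R outer_prod (bianchi_nf_a t0)"
    and "det (bianchi_nf_N t) = 0 \<longrightarrow> det (bianchi_nf_N t0) = 0"
    and "pos_semidef (bianchi_nf_N t) \<or> neg_semidef (bianchi_nf_N t) \<longrightarrow>
      pos_semidef (bianchi_nf_N t0) \<or> neg_semidef (bianchi_nf_N t0)"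
    and "neg_semidef (adjugate3 (bianchi_nf_N t)) \<longrightarrow> neg_semidef (adjugate3 (bianchi_nf_N t0))"
    using a_eq_0 N_eq_0 adjugate_eq_outer_prod det_eq_0 semidefinite adjugate_neg_semidef by blast+
  moreover have "quad_form (bianchi_nf_N t) (vector [1, 0, 1]) = 0 \<longrightarrow> bianchi_nf_N t0 \<noteq> diag3 1 1 1"
    using isotropic_not_identity[of "vector [1, 0, 1]"] by (simp add: mat_1_eq_diag3)
  ultimately show ?thesis
    by (cases t; cases t0) (simp_all add: degenerates_to_def quad_form_diag3 c_def det_3)
qed

lemma lie_iso_bianchi_nf_iff: "lie_iso (bianchi_nf t) (bianchi_nf t0) \<longleftrightarrow> t = t0"
proof
  assume iso: "lie_iso (bianchi_nf t) (bianchi_nf t0)"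
  have "degenerates_to t' t" if "lie_iso (bianchi_nf t) (bianchi_nf t')" for t t'
    using that contracts_via_const contracts_via_bianchi_nf_degenerates_to
    unfolding lie_iso_iff_change_basis by metis
  then show "t = t0"
    using iso lie_iso_sym degenerates_to_antisym by metis
qed (simp add: lie_iso_refl)

lemma continuous_contraction_degenerates_to:
  assumes "lie_iso br (bianchi_nf t)" and "lie_iso br0 (bianchi_nf t0)"
    and "continuous_contraction br br0"
  shows "degenerates_to t t0"
  using assms contracts_via_lie_iso contracts_via_bianchi_nf_degenerates_to
  unfolding continuous_contraction_def by metis

section \<open>Contractions along powers of a diagonal matrix\<close>

definition diagonal_contraction :: "bracket \<Rightarrow> bracket \<Rightarrow> (3 \<Rightarrow> nat) \<Rightarrow> bool" where
  "diagonal_contraction br br0 \<alpha> \<longleftrightarrow> (\<exists>P Q br1. invertible P \<and> invertible Q \<and>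
     contracts_via br (\<lambda>\<epsilon>. P ** diag_pow \<epsilon> \<alpha> ** Q) br1 \<and> lie_iso br1 br0)"

lemma diagonal_contraction_lie_iso:
  assumes "lie_iso br br'" and "lie_iso br0 br0'" and "diagonal_contraction br br0 \<alpha>"
  shows "diagonal_contraction br' br0' \<alpha>"
proof -
  obtain P Q br1 where PQ: "invertible P" "invertible Q" "lie_iso br1 br0"
    and c: "contracts_via br (\<lambda>\<epsilon>. P ** diag_pow \<epsilon> \<alpha> ** Q) br1"
    using assms(3) unfolding diagonal_contraction_def by blast
  obtain A where A: "invertible A" "br = change_basis A br'"
    using assms(1) lie_iso_iff_change_basis by blast
  have "contracts_via br' (\<lambda>\<epsilon>. A ** (P ** diag_pow \<epsilon> \<alpha> ** Q)) br1"
    using contracts_via_change_basis_left[OF A(1)] c A(2) by blast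
  then have "contracts_via br' (\<lambda>\<epsilon>. (A ** P) ** diag_pow \<epsilon> \<alpha> ** Q) br1"
    by (simp add: matrix_mul_assoc)
  then show ?thesis
    unfolding diagonal_contraction_def
    using A(1) PQ assms(2) invertible_mult lie_iso_trans by blast
qed

lemma diagonal_contractionI:
  assumes "invertible P" and "contracts_via br (\<lambda>\<epsilon>. P ** diag_pow \<epsilon> \<alpha>) br0"
  shows "diagonal_contraction br br0 \<alpha>"
  unfolding diagonal_contraction_def
  using assms lie_iso_refl by (intro exI[of _ P] exI[of _ "mat 1"]) (auto simp: invertible_def)

lemma diagonal_contractionE:
  assumes "diagonal_contraction br br0 \<alpha>"
  obtains P br1 where "invertible P" "contracts_via br (\<lambda>\<epsilon>. P ** diag_pow \<epsilon> \<alpha>) br1" "lie_iso br1 br0"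
proof -
  obtain P Q br1 where PQ: "invertible P" "invertible Q" "lie_iso br1 br0"
    and c: "contracts_via br (\<lambda>\<epsilon>. P ** diag_pow \<epsilon> \<alpha> ** Q) br1"
    using assms unfolding diagonal_contraction_def by blast
  have "contracts_via br (\<lambda>\<epsilon>. P ** diag_pow \<epsilon> \<alpha> ** Q ** matrix_inv Q) (change_basis (matrix_inv Q) br1)"
    using contracts_via_change_basis_right[OF invertible_matrix_inv[OF PQ(2)] c] .
  moreover have "(\<lambda>\<epsilon>. P ** diag_pow \<epsilon> \<alpha> ** Q ** matrix_inv Q) = (\<lambda>\<epsilon>. P ** diag_pow \<epsilon> \<alpha>)"
    by (simp add: matrix_inv_right[OF PQ(2)] flip: matrix_mul_assoc)
  moreover have "lie_iso (change_basis (matrix_inv Q) br1) br0"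
    using lie_iso_change_basis[OF invertible_matrix_inv[OF PQ(2)]] PQ(3) lie_iso_trans by blast
  ultimately show thesis
    using that PQ(1) by simp
qed

lemma tendsto_power_ratio:
  assumes "m \<le> s \<or> c = 0"
  shows "((\<lambda>\<epsilon>::real. \<epsilon> ^ s / \<epsilon> ^ m * c) \<longlongrightarrow> (if m = s then c else 0)) (at_right 0)"
proof (cases "c = 0")
  case False
  with assms have "m \<le> s"
    by simp
  have "\<forall>\<^sub>F \<epsilon> in at_right (0::real). \<epsilon> ^ (s - m) * c = \<epsilon> ^ s / \<epsilon> ^ m * c"
    using eventually_at_right_0_Ioc by (rule eventually_mono) (simp add: \<open>m \<le> s\<close> power_diff)
  moreover have "((\<lambda>\<epsilon>::real. \<epsilon> ^ (s - m) * c) \<longlongrightarrow> 0 ^ (s - m) * c) (at_right 0)"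
    by (intro tendsto_intros)
  then have "((\<lambda>\<epsilon>::real. \<epsilon> ^ (s - m) * c) \<longlongrightarrow> (if m = s then c else 0)) (at_right 0)"
    using \<open>m \<le> s\<close> by (cases "m = s") (simp_all add: zero_power)
  ultimately show ?thesis
    by (rule Lim_transform_eventually[rotated])
qed simp

lemma tendsto_power_ratio_iff:
  "((\<lambda>\<epsilon>::real. \<epsilon> ^ s / \<epsilon> ^ m * c) \<longlongrightarrow> L) (at_right 0) \<longleftrightarrow>
     (m \<le> s \<or> c = 0) \<and> L = (if m = s then c else 0)"
proof
  assume lim: "((\<lambda>\<epsilon>::real. \<epsilon> ^ s / \<epsilon> ^ m * c) \<longlongrightarrow> L) (at_right 0)"
  have "m \<le> s \<or> c = 0"
  proof (rule ccontr)
    assume "\<not> (m \<le> s \<or> c = 0)"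
    then have "s < m" "c \<noteq> 0"
      by auto
    have "((\<lambda>\<epsilon>::real. \<epsilon> ^ (m - s) * (\<epsilon> ^ s / \<epsilon> ^ m * c)) \<longlongrightarrow> 0 ^ (m - s) * L) (at_right 0)"
      by (intro tendsto_intros lim)
    moreover have "\<forall>\<^sub>F \<epsilon> in at_right (0::real). \<epsilon> ^ (m - s) * (\<epsilon> ^ s / \<epsilon> ^ m * c) = c"
      using eventually_at_right_0_Ioc
      by (rule eventually_mono) (simp add: \<open>s < m\<close> power_diff less_imp_le)
    ultimately have "0 ^ (m - s) * L = c"
      by (intro tendsto_unique_eventually[OF _ _ tendsto_const]) auto
    then show False
      using \<open>s < m\<close> \<open>c \<noteq> 0\<close> by (simp add: zero_power)
  qed
  with lim show "(m \<le> s \<or> c = 0) \<and> L = (if m = s then c else 0)"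
    using tendsto_unique[OF trivial_limit_at_right_real lim tendsto_power_ratio] by blast
qed (use tendsto_power_ratio in blast)

lemma det_diag_pow: "det (diag_pow \<epsilon> \<alpha>) = \<epsilon> ^ (\<alpha> 1 + \<alpha> 2 + \<alpha> 3)"
  by (simp add: diag_pow_def det_3 power_add)

lemma diag_pow_inverse: "\<epsilon> \<noteq> 0 \<Longrightarrow> diag_pow \<epsilon> \<alpha> ** diag_pow (1/\<epsilon>) \<alpha> = mat 1"
  by (simp add: diag_pow_def vec3_simps power_one_over flip: power_mult_distrib)

lemma symmetric_diag_pow: "transpose (diag_pow \<epsilon> \<alpha>) = diag_pow \<epsilon> \<alpha>"
  by (simp add: diag_pow_def vec_eq_iff transpose_def)

lemma continuous_on_diag_pow: "continuous_on S (\<lambda>\<epsilon>. diag_pow \<epsilon> \<alpha>)"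
  unfolding diag_pow_def
proof (intro continuous_on_vec_lambda)
  fix i j :: 3
  show "continuous_on S (\<lambda>\<epsilon>. if i = j then \<epsilon> ^ \<alpha> i else 0)"
    by (cases "i = j") (simp_all add: continuous_on_power continuous_on_id)
qed

lemma diag_pow_congruence_entry:
  "(diag_pow \<epsilon> \<alpha> ** X ** diag_pow \<epsilon> \<alpha>) $ i $ j = \<epsilon> ^ \<alpha> i * X $ i $ j * \<epsilon> ^ \<alpha> j"
  using exhaust_3[of i] exhaust_3[of j] by (auto simp: diag_pow_def vec3_simps)

lemma vector_diag_pow_entry: "(x v* diag_pow \<epsilon> \<alpha>) $ i = \<epsilon> ^ \<alpha> i * x $ i"
  using exhaust_3[of i] by (auto simp: diag_pow_def vec3_simps)

lemma diag_pow_right_inverse: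
  assumes "P ** M = mat 1" and "\<epsilon> \<noteq> 0"
  shows "P ** diag_pow \<epsilon> \<alpha> ** (diag_pow (1/\<epsilon>) \<alpha> ** M) = mat 1"
proof -
  have "P ** diag_pow \<epsilon> \<alpha> ** (diag_pow (1/\<epsilon>) \<alpha> ** M) = P ** (diag_pow \<epsilon> \<alpha> ** diag_pow (1/\<epsilon>) \<alpha>) ** M"
    by (simp add: matrix_mul_assoc)
  then show ?thesis
    by (simp add: diag_pow_inverse assms)
qed

definition diag_limit_N :: "(3 \<Rightarrow> nat) \<Rightarrow> real^3^3 \<Rightarrow> real^3^3" where
  "diag_limit_N \<alpha> N = (\<chi> i j. if \<alpha> i + \<alpha> j = \<alpha> 1 + \<alpha> 2 + \<alpha> 3 then N $ i $ j else 0)"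

definition diag_limit_a :: "(3 \<Rightarrow> nat) \<Rightarrow> real^3 \<Rightarrow> real^3" where
  "diag_limit_a \<alpha> a = (\<chi> i. if \<alpha> i = 0 then a $ i else 0)"

lemma symmetric_diag_limit_N: "transpose N = N \<Longrightarrow> transpose (diag_limit_N \<alpha> N) = diag_limit_N \<alpha> N"
  by (simp add: diag_limit_N_def vec_eq_iff transpose_def add.commute)

definition diag_scaled_N :: "real \<Rightarrow> (3 \<Rightarrow> nat) \<Rightarrow> real^3^3 \<Rightarrow> real^3^3" where
  "diag_scaled_N \<epsilon> \<alpha> N = (\<chi> i j. \<epsilon> ^ (\<alpha> 1 + \<alpha> 2 + \<alpha> 3) / \<epsilon> ^ (\<alpha> i + \<alpha> j) * N $ i $ j)"

definition diag_scaled_a :: "real \<Rightarrow> (3 \<Rightarrow> nat) \<Rightarrow> real^3 \<Rightarrow> real^3" where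
  "diag_scaled_a \<epsilon> \<alpha> a = (\<chi> i. \<epsilon> ^ \<alpha> i * a $ i)"

lemma symmetric_diag_scaled_N: "transpose N = N \<Longrightarrow> transpose (diag_scaled_N \<epsilon> \<alpha> N) = diag_scaled_N \<epsilon> \<alpha> N"
  by (simp add: diag_scaled_N_def vec_eq_iff transpose_def add.commute)

lemma tendsto_diag_scaled_N_iff:
  "((\<lambda>\<epsilon>. diag_scaled_N \<epsilon> \<alpha> N) \<longlongrightarrow> L) (at_right 0) \<longleftrightarrow>
     (\<forall>i j. \<alpha> i + \<alpha> j \<le> \<alpha> 1 + \<alpha> 2 + \<alpha> 3 \<or> N $ i $ j = 0) \<and> L = diag_limit_N \<alpha> N"
proof -
  have "((\<lambda>\<epsilon>. diag_scaled_N \<epsilon> \<alpha> N) \<longlongrightarrow> L) (at_right 0) \<longleftrightarrow>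
      (\<forall>i j. ((\<lambda>\<epsilon>. diag_scaled_N \<epsilon> \<alpha> N $ i $ j) \<longlongrightarrow> L $ i $ j) (at_right 0))"
  proof
    assume lim: "((\<lambda>\<epsilon>. diag_scaled_N \<epsilon> \<alpha> N) \<longlongrightarrow> L) (at_right 0)"
    show "\<forall>i j. ((\<lambda>\<epsilon>. diag_scaled_N \<epsilon> \<alpha> N $ i $ j) \<longlongrightarrow> L $ i $ j) (at_right 0)"
      using tendsto_vec_nth[OF tendsto_vec_nth[OF lim]] by blast
  qed (intro vec_tendstoI, blast)
  also have "\<dots> \<longleftrightarrow> (\<forall>i j. (\<alpha> i + \<alpha> j \<le> \<alpha> 1 + \<alpha> 2 + \<alpha> 3 \<or> N $ i $ j = 0) \<and> L $ i $ j = diag_limit_N \<alpha> N $ i $ j)"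
    by (simp only: diag_scaled_N_def diag_limit_N_def vec_lambda_beta tendsto_power_ratio_iff)
  finally show ?thesis
    by (auto simp: vec_eq_iff)
qed

lemma tendsto_diag_scaled_a: "((\<lambda>\<epsilon>. diag_scaled_a \<epsilon> \<alpha> a) \<longlongrightarrow> diag_limit_a \<alpha> a) (at_right 0)"
proof (rule vec_tendstoI)
  show "((\<lambda>\<epsilon>. diag_scaled_a \<epsilon> \<alpha> a $ i) \<longlongrightarrow> diag_limit_a \<alpha> a $ i) (at_right 0)" for i
    using tendsto_power_ratio_iff[of "\<alpha> i" 0] by (simp add: diag_scaled_a_def diag_limit_a_def)
qed

lemma change_basis_diag_pow:
  fixes P M N :: "real^3^3"
  assumes PM: "P ** M = mat 1" and "\<epsilon> \<noteq> 0"
  shows "change_basis (P ** diag_pow \<epsilon> \<alpha>) (bianchi_bracket N a) = bianchi_bracket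
    (diag_scaled_N \<epsilon> \<alpha> (det P *\<^sub>R (M ** N ** transpose M))) (diag_scaled_a \<epsilon> \<alpha> (a v* P))"
proof -
  let ?D = "diag_pow (1/\<epsilon>) \<alpha>"
  note inv = diag_pow_right_inverse[OF PM \<open>\<epsilon> \<noteq> 0\<close>, of \<alpha>]
  have "?D ** M ** N ** transpose (?D ** M) = ?D ** (M ** N ** transpose M) ** ?D"
    by (simp add: matrix_transpose_mul matrix_mul_assoc symmetric_diag_pow)
  then have "det (P ** diag_pow \<epsilon> \<alpha>) *\<^sub>R (?D ** M ** N ** transpose (?D ** M)) =
      diag_scaled_N \<epsilon> \<alpha> (det P *\<^sub>R (M ** N ** transpose M))"
    by (simp add: diag_scaled_N_def vec_eq_iff det_mul det_diag_pow diag_pow_congruence_entry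
        power_add power_one_over field_simps)
  moreover have "a v* (P ** diag_pow \<epsilon> \<alpha>) = diag_scaled_a \<epsilon> \<alpha> (a v* P)"
    by (simp add: diag_scaled_a_def vec_eq_iff vector_matrix_mul_assoc[symmetric] vector_diag_pow_entry)
  ultimately show ?thesis
    by (simp add: change_basis_bianchi_bracket[OF inv])
qed

lemma tendsto_bianchi_bracket:
  assumes "(N \<longlongrightarrow> N0) F" and "(a \<longlongrightarrow> a0) F"
  shows "((\<lambda>\<epsilon>. bianchi_bracket (N \<epsilon>) (a \<epsilon>) x y) \<longlongrightarrow> bianchi_bracket N0 a0 x y) F"
  unfolding bianchi_bracket_def matrix_vector_mult_def by (intro tendsto_intros assms)

lemma contracts_via_diag_pow:
  fixes P M N :: "real^3^3"
  defines "N1 \<equiv> det P *\<^sub>R (M ** N ** transpose M)"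
  assumes PM: "P ** M = mat 1"
    and converges: "\<And>i j. \<alpha> i + \<alpha> j \<le> \<alpha> 1 + \<alpha> 2 + \<alpha> 3 \<or> N1 $ i $ j = 0"
  shows "contracts_via (bianchi_bracket N a) (\<lambda>\<epsilon>. P ** diag_pow \<epsilon> \<alpha>)
    (bianchi_bracket (diag_limit_N \<alpha> N1) (diag_limit_a \<alpha> (a v* P)))"
  unfolding contracts_via_iff_change_basis
proof (intro conjI ballI allI)
  show "continuous_on {0<..1} (\<lambda>\<epsilon>. P ** diag_pow \<epsilon> \<alpha>)"
    by (intro continuous_on_matrix_mult continuous_on_const continuous_on_diag_pow)
  show "invertible (P ** diag_pow \<epsilon> \<alpha>)" if "\<epsilon> \<in> {0<..1}" for \<epsilon>
    using diag_pow_right_inverse[OF PM, of \<epsilon> \<alpha>] that invertible_right_inverse by fastforce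
  fix x y
  have "((\<lambda>\<epsilon>. bianchi_bracket (diag_scaled_N \<epsilon> \<alpha> N1) (diag_scaled_a \<epsilon> \<alpha> (a v* P)) x y) \<longlongrightarrow>
      bianchi_bracket (diag_limit_N \<alpha> N1) (diag_limit_a \<alpha> (a v* P)) x y) (at_right 0)"
    using converges tendsto_diag_scaled_N_iff
    by (intro tendsto_bianchi_bracket tendsto_diag_scaled_a) blast
  moreover have "\<forall>\<^sub>F \<epsilon> in at_right 0.
      bianchi_bracket (diag_scaled_N \<epsilon> \<alpha> N1) (diag_scaled_a \<epsilon> \<alpha> (a v* P)) x y =
      change_basis (P ** diag_pow \<epsilon> \<alpha>) (bianchi_bracket N a) x y"
    using eventually_at_right_0_Ioc
    by (rule eventually_mono) (simp add: change_basis_diag_pow[OF PM] N1_def)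
  ultimately show "((\<lambda>\<epsilon>. change_basis (P ** diag_pow \<epsilon> \<alpha>) (bianchi_bracket N a) x y) \<longlongrightarrow>
      bianchi_bracket (diag_limit_N \<alpha> N1) (diag_limit_a \<alpha> (a v* P)) x y) (at_right 0)"
    by (rule Lim_transform_eventually)
qed

lemma contracts_via_diag_pow_limit:
  fixes P M N :: "real^3^3"
  defines "N1 \<equiv> det P *\<^sub>R (M ** N ** transpose M)"
  assumes PM: "P ** M = mat 1" and sym: "transpose N = N"
    and c: "contracts_via (bianchi_bracket N a) (\<lambda>\<epsilon>. P ** diag_pow \<epsilon> \<alpha>) br0"
  shows "\<And>i j. \<alpha> i + \<alpha> j \<le> \<alpha> 1 + \<alpha> 2 + \<alpha> 3 \<or> N1 $ i $ j = 0"
    and "br0 = bianchi_bracket (diag_limit_N \<alpha> N1) (diag_limit_a \<alpha> (a v* P))"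
proof -
  have "transpose N1 = N1"
    unfolding N1_def by (rule symmetric_congruence[OF sym])
  have lim: "((\<lambda>\<epsilon>. change_basis (P ** diag_pow \<epsilon> \<alpha>) (bianchi_bracket N a) x y) \<longlongrightarrow> br0 x y) (at_right 0)"
    for x y
    using c unfolding contracts_via_iff_change_basis by blast
  have "((\<lambda>\<epsilon>. bianchi_N (change_basis (P ** diag_pow \<epsilon> \<alpha>) (bianchi_bracket N a))) \<longlongrightarrow> bianchi_N br0)
      (at_right 0)"
    by (rule tendsto_bianchi_N[of "\<lambda>\<epsilon>. change_basis (P ** diag_pow \<epsilon> \<alpha>) (bianchi_bracket N a)", OF lim])
  moreover have "\<forall>\<^sub>F \<epsilon> in at_right 0.
      bianchi_N (change_basis (P ** diag_pow \<epsilon> \<alpha>) (bianchi_bracket N a)) = diag_scaled_N \<epsilon> \<alpha> N1"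
    using eventually_at_right_0_Ioc
    by (rule eventually_mono) (simp add: change_basis_diag_pow[OF PM] bianchi_N_bianchi_bracket
        symmetric_diag_scaled_N \<open>transpose N1 = N1\<close> flip: N1_def)
  ultimately have "((\<lambda>\<epsilon>. diag_scaled_N \<epsilon> \<alpha> N1) \<longlongrightarrow> bianchi_N br0) (at_right 0)"
    by (rule Lim_transform_eventually)
  then show converges: "\<alpha> i + \<alpha> j \<le> \<alpha> 1 + \<alpha> 2 + \<alpha> 3 \<or> N1 $ i $ j = 0" for i j
    unfolding tendsto_diag_scaled_N_iff by blast
  have "contracts_via (bianchi_bracket N a) (\<lambda>\<epsilon>. P ** diag_pow \<epsilon> \<alpha>)
      (bianchi_bracket (diag_limit_N \<alpha> N1) (diag_limit_a \<alpha> (a v* P)))"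
    unfolding N1_def by (rule contracts_via_diag_pow[OF PM]) (use converges in \<open>simp add: N1_def\<close>)
  then show "br0 = bianchi_bracket (diag_limit_N \<alpha> N1) (diag_limit_a \<alpha> (a v* P))"
    using tendsto_unique[OF trivial_limit_at_right_real lim]
    unfolding contracts_via_iff_change_basis by blast
qed

lemma diagonal_contraction_bianchi_nfI:
  fixes P M :: "real^3^3" and t t0 :: bianchi_type
  defines "N1 \<equiv> det P *\<^sub>R (M ** bianchi_nf_N t ** transpose M)"
  assumes PM: "P ** M = mat 1"
    and converges: "\<And>i j. \<alpha> i + \<alpha> j \<le> \<alpha> 1 + \<alpha> 2 + \<alpha> 3 \<or> N1 $ i $ j = 0"
    and "diag_limit_N \<alpha> N1 = bianchi_nf_N t0" and "diag_limit_a \<alpha> (bianchi_nf_a t v* P) = bianchi_nf_a t0"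
  shows "diagonal_contraction (bianchi_nf t) (bianchi_nf t0) \<alpha>"
proof (rule diagonal_contractionI)
  show "invertible P"
    using PM invertible_right_inverse by blast
  show "contracts_via (bianchi_nf t) (\<lambda>\<epsilon>. P ** diag_pow \<epsilon> \<alpha>) (bianchi_nf t0)"
    using contracts_via_diag_pow[OF PM converges[unfolded N1_def], where a = "bianchi_nf_a t"] assms(4,5)
    unfolding N1_def bianchi_nf_def by simp
qed

lemmas diag_limit_simps = diag_limit_N_def diag_limit_a_def vec3_simps diag3_def

lemma diagonal_contraction_refl: "diagonal_contraction (bianchi_nf t) (bianchi_nf t) (\<lambda>_. 0)"
  by (rule diagonal_contraction_bianchi_nfI[where P = "mat 1" and M = "mat 1"])
    (cases t; simp add: diag_limit_simps)+

lemma diagonal_contraction_Bianchi_I: "diagonal_contraction (bianchi_nf t) (bianchi_nf Bianchi_I) (\<lambda>_. 1)"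
  by (rule diagonal_contraction_bianchi_nfI[where P = "mat 1" and M = "mat 1"])
    (cases t; simp add: diag_limit_simps)+

lemma diagonal_contraction_Bianchi_II:
  assumes "t \<noteq> Bianchi_I" and "t \<noteq> Bianchi_V" and "t \<noteq> Bianchi_IX"
  shows "diagonal_contraction (bianchi_nf t) (bianchi_nf Bianchi_II) (\<lambda>i. if i = 2 then 0 else 1)"
proof (cases "t = Bianchi_VIII")
  case True
  \<comment> \<open>\<open>e2 + e3\<close> is isotropic for \<open>diag(1, 1, -1)\<close> and becomes the third basis vector.\<close>
  show ?thesis
    unfolding True
    by (rule diagonal_contraction_bianchi_nfI[where
          P = "vector [vector [1, 0, 0], vector [0, 1, 0], vector [0, -1, 1]]"
          and M = "vector [vector [1, 0, 0], vector [0, 1, 0], vector [0, 1, 1]]"])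
      (simp_all add: diag_limit_simps)
next
  case False
  with assms show ?thesis
    by (intro diagonal_contraction_bianchi_nfI[where P = "mat 1" and M = "mat 1"])
      (cases t; simp add: diag_limit_simps)+
qed

lemma diagonal_contraction_IX_II:
  "diagonal_contraction (bianchi_nf Bianchi_IX) (bianchi_nf Bianchi_II) (\<lambda>i. if i = 1 then 2 else 1)"
  by (rule diagonal_contraction_bianchi_nfI[where P = "mat 1" and M = "mat 1"])
    (simp_all add: diag_limit_simps)

lemma diagonal_contraction_Bianchi_VII0:
  assumes "t = Bianchi_IX \<or> t = Bianchi_VIII"
  shows "diagonal_contraction (bianchi_nf t) (bianchi_nf Bianchi_VII0) (\<lambda>i. if i = 3 then 0 else 1)"
  using assms
  by (elim disjE; intro diagonal_contraction_bianchi_nfI[where P = "mat 1" and M = "mat 1"])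
    (simp_all add: diag_limit_simps)

lemma diagonal_contraction_VIII_VI0:
  "diagonal_contraction (bianchi_nf Bianchi_VIII) (bianchi_nf Bianchi_VI0) (\<lambda>i. if i = 3 then 0 else 1)"
  by (rule diagonal_contraction_bianchi_nfI[where
        P = "vector [vector [1, 0, 0], vector [0, 0, 1], vector [0, -1, 0]]"
        and M = "vector [vector [1, 0, 0], vector [0, 0, -1], vector [0, 1, 0]]"])
    (simp_all add: diag_limit_simps)

lemma diagonal_contraction_IV_V:
  "diagonal_contraction (bianchi_nf (Bianchi_B 0)) (bianchi_nf Bianchi_V) (\<lambda>i. if i = 2 then 1 else 0)"
  by (rule diagonal_contraction_bianchi_nfI[where P = "mat 1" and M = "mat 1"])
    (simp_all add: diag_limit_simps)

lemma degenerates_to_diagonal_contraction: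
  assumes "degenerates_to t t0"
  obtains \<alpha> where "diagonal_contraction (bianchi_nf t) (bianchi_nf t0) \<alpha>"
    and "(t, t0) \<noteq> (Bianchi_IX, Bianchi_II) \<Longrightarrow> \<forall>i. \<alpha> i \<in> {0, 1}"
  using assms unfolding degenerates_to_def
proof (elim disjE)
  assume "t0 = t"
  then show thesis
    using that[of "\<lambda>_. 0"] diagonal_contraction_refl by simp
next
  assume "t0 = Bianchi_I"
  then show thesis
    using that[of "\<lambda>_. 1"] diagonal_contraction_Bianchi_I by simp
next
  assume "t0 = Bianchi_II \<and> t \<noteq> Bianchi_I \<and> t \<noteq> Bianchi_V"
  then show thesis
    using that[of "\<lambda>i. if i = 2 then 0 else 1"] that[of "\<lambda>i. if i = 1 then 2 else 1"]
      diagonal_contraction_Bianchi_II diagonal_contraction_IX_II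
    by (cases "t = Bianchi_IX") auto
next
  assume "(t, t0) \<in> {(Bianchi_IX, Bianchi_VII0), (Bianchi_VIII, Bianchi_VII0), (Bianchi_VIII, Bianchi_VI0),
    (Bianchi_B 0, Bianchi_V)}"
  then show thesis
    using that[of "\<lambda>i. if i = 3 then 0 else 1"] that[of "\<lambda>i. if i = 2 then 1 else 0"]
      diagonal_contraction_Bianchi_VII0 diagonal_contraction_VIII_VI0 diagonal_contraction_IV_V
    by auto
qed

lemma adjugate3_mat_1: "adjugate3 (mat 1) = mat 1"
  by (simp add: mat_1_eq_diag3)

lemma gram_diagonal_pos:
  fixes M :: "real^'n^'n"
  assumes "invertible M"
  shows "(M ** transpose M) $ i $ i > 0"
proof -
  have "M $ i \<noteq> 0"
  proof
    assume "M $ i = 0"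
    then have "row i M = 0"
      by (simp add: row_def vec_eq_iff)
    then show False
      using assms det_zero_row(1)[of i M] invertible_det_nz by auto
  qed
  moreover have "(M ** transpose M) $ i $ i = M $ i \<bullet> M $ i"
    by (simp add: matrix_matrix_mult_def transpose_def inner_vec_def)
  ultimately show ?thesis
    by simp
qed

lemma diag_limit_N_adjugate3_eq_0:
  fixes X :: "real^3^3"
  assumes "\<forall>i. \<alpha> i \<in> {0, 1}" and "\<And>i. 2 * \<alpha> i \<le> \<alpha> 1 + \<alpha> 2 + \<alpha> 3"
    and "\<And>k. adjugate3 X $ k $ k \<noteq> 0" and "adjugate3 (diag_limit_N \<alpha> X) = 0"
  shows "diag_limit_N \<alpha> X = 0"
proof -
  have "\<alpha> 1 = 0 \<or> \<alpha> 1 = 1" "\<alpha> 2 = 0 \<or> \<alpha> 2 = 1" "\<alpha> 3 = 0 \<or> \<alpha> 3 = 1"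
    using assms(1) by auto
  then show ?thesis
    using assms(2)[of 1] assms(2)[of 2] assms(2)[of 3] assms(3)[of 1] assms(3)[of 2] assms(3)[of 3] assms(4)
    by (elim disjE) (simp_all add: diag_limit_N_def adjugate3_def vec_eq_iff forall_3)
qed

lemma lie_iso_Bianchi_II_rank_one:
  assumes sym: "transpose N0 = N0" and iso: "lie_iso (bianchi_bracket N0 a0) (bianchi_nf Bianchi_II)"
  shows "adjugate3 N0 = 0" and "N0 \<noteq> 0"
proof -
  obtain A where "contracts_via (bianchi_nf Bianchi_II) (\<lambda>_. A) (bianchi_bracket N0 a0)"
    using iso contracts_via_const unfolding lie_iso_iff_change_basis by metis
  then interpret to_N0: bianchi_contraction "diag3 1 0 0" 0 N0 a0 "\<lambda>_. A"
    using sym by unfold_locales (simp_all add: bianchi_nf_def)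
  show "adjugate3 N0 = 0"
    using to_N0.adjugate_eq_outer_prod[of 0] by simp
  obtain B where "contracts_via (bianchi_bracket N0 a0) (\<lambda>_. B) (bianchi_nf Bianchi_II)"
    using lie_iso_sym[OF iso] contracts_via_const unfolding lie_iso_iff_change_basis by metis
  then interpret from_N0: bianchi_contraction N0 a0 "diag3 1 0 0" 0 "\<lambda>_. B"
    using sym by unfold_locales (simp_all add: bianchi_nf_def)
  show "N0 \<noteq> 0"
    using from_N0.N_eq_0 by auto
qed

text \<open>With exponents in \<open>{0, 1}\<close> the limit of the definite form of so(3) keeps a principal
  block of it, hence has rank 0, 2 or 3, never the rank 1 of the Heisenberg algebra.\<close>
lemma not_simple_diagonal_contraction_IX_II:
  assumes "\<forall>i. \<alpha> i \<in> {0, 1}"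
  shows "\<not> diagonal_contraction (bianchi_nf Bianchi_IX) (bianchi_nf Bianchi_II) \<alpha>"
proof
  assume "diagonal_contraction (bianchi_nf Bianchi_IX) (bianchi_nf Bianchi_II) \<alpha>"
  then obtain P br1 where P: "invertible P" and iso: "lie_iso br1 (bianchi_nf Bianchi_II)"
    and c: "contracts_via (bianchi_bracket (mat 1) 0) (\<lambda>\<epsilon>. P ** diag_pow \<epsilon> \<alpha>) br1"
    by (elim diagonal_contractionE) (simp add: bianchi_nf_def mat_1_eq_diag3)
  let ?M = "matrix_inv P"
  define N1 where "N1 = det P *\<^sub>R (?M ** mat 1 ** transpose ?M)"
  define N0 where "N0 = diag_limit_N \<alpha> N1"
  note limit = contracts_via_diag_pow_limit[OF matrix_inv_right[OF P] transpose_mat c, folded N1_def]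
  have "diag_limit_a \<alpha> 0 = 0"
    by (simp add: diag_limit_a_def vec_eq_iff)
  then have br1: "br1 = bianchi_bracket N0 0"
    using limit(2) by (simp add: N0_def)
  have "N1 $ i $ i \<noteq> 0" for i
    using gram_diagonal_pos[OF invertible_matrix_inv[OF P], of i] P
    by (simp add: N1_def invertible_det_nz)
  then have diagonal: "2 * \<alpha> i \<le> \<alpha> 1 + \<alpha> 2 + \<alpha> 3" for i
    using limit(1)[of i i] by simp
  have adjugate: "adjugate3 N1 $ k $ k \<noteq> 0" for k
  proof -
    have "adjugate3 N1 = transpose P ** transpose (transpose P)"
      using adjugate3_bianchi_N_change[OF P, of "mat 1"]
      by (simp add: N1_def bianchi_N_change_def adjugate3_mat_1)
    then show ?thesis
      using gram_diagonal_pos[OF transpose_invertible[OF P], of k] by simp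
  qed
  have "transpose N0 = N0"
    unfolding N0_def N1_def
    by (intro symmetric_diag_limit_N symmetric_congruence) simp
  then have "adjugate3 N0 = 0" and "N0 \<noteq> 0"
    using lie_iso_Bianchi_II_rank_one iso unfolding br1 by blast+
  then show False
    using diag_limit_N_adjugate3_eq_0[OF assms diagonal adjugate] unfolding N0_def by blast
qed

theorem theorem2:
  fixes br br0 :: bracket
  assumes "lie_bracket br" and "lie_bracket br0"
    and "continuous_contraction br br0"
  shows "(\<exists>P Q :: real^3^3. \<exists>\<alpha> :: 3 \<Rightarrow> nat. \<exists>br1.
             invertible P \<and> invertible Q \<and>
             contracts_via br (\<lambda>\<epsilon>. P ** diag_pow \<epsilon> \<alpha> ** Q) br1 \<and> lie_iso br1 br0)
       \<and> (\<not> (lie_iso br so3_br \<and> lie_iso br0 h3_br) \<longrightarrow>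
            (\<exists>P Q :: real^3^3. \<exists>\<alpha> :: 3 \<Rightarrow> nat. \<exists>br1.
             invertible P \<and> invertible Q \<and> (\<forall>i. \<alpha> i \<in> {0, 1}) \<and>
             contracts_via br (\<lambda>\<epsilon>. P ** diag_pow \<epsilon> \<alpha> ** Q) br1 \<and> lie_iso br1 br0))
       \<and> (lie_iso br so3_br \<and> lie_iso br0 h3_br \<longrightarrow>
            \<not> (\<exists>P Q :: real^3^3. \<exists>\<alpha> :: 3 \<Rightarrow> nat. \<exists>br1.
             invertible P \<and> invertible Q \<and> (\<forall>i. \<alpha> i \<in> {0, 1}) \<and>
             contracts_via br (\<lambda>\<epsilon>. P ** diag_pow \<epsilon> \<alpha> ** Q) br1 \<and> lie_iso br1 br0))"
proof -
  obtain t t0 where t: "lie_iso br (bianchi_nf t)" and t0: "lie_iso br0 (bianchi_nf t0)"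
    using bianchi_classification assms(1,2) by metis
  have transfer: "diagonal_contraction br br0 \<alpha> \<longleftrightarrow> diagonal_contraction (bianchi_nf t) (bianchi_nf t0) \<alpha>" for \<alpha>
    using diagonal_contraction_lie_iso t t0 lie_iso_sym by blast
  have exceptional: "lie_iso br so3_br \<and> lie_iso br0 h3_br \<longleftrightarrow> t = Bianchi_IX \<and> t0 = Bianchi_II"
    unfolding so3_br_eq_bianchi_nf h3_br_eq_bianchi_nf
    using t t0 lie_iso_trans lie_iso_sym lie_iso_bianchi_nf_iff by metis
  obtain \<alpha> where "diagonal_contraction (bianchi_nf t) (bianchi_nf t0) \<alpha>"
    and simple: "(t, t0) \<noteq> (Bianchi_IX, Bianchi_II) \<Longrightarrow> \<forall>i. \<alpha> i \<in> {0, 1}"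
    using degenerates_to_diagonal_contraction continuous_contraction_degenerates_to[OF t t0 assms(3)]
    by blast
  then have "diagonal_contraction br br0 \<alpha>"
    using transfer by blast
  moreover have "\<not> diagonal_contraction br br0 \<beta>"
    if "t = Bianchi_IX \<and> t0 = Bianchi_II" and "\<forall>i. \<beta> i \<in> {0, 1}" for \<beta>
    using not_simple_diagonal_contraction_IX_II transfer that by blast
  ultimately show ?thesis
    using simple exceptional unfolding diagonal_contraction_def by blast
qed

end
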